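(* Let $\kappa\ge2$, and let $\psi^+$ be a rooted binary topological tree on a taxon set $X$ with $|X|\ge 2$. Let $\psi_A^+$ and $\psi_B^+$ be the rooted subtrees descending from the two children of the root, on taxon sets $A$ and $B$ respectively, so $X=A\sqcup B$ and $\psi^+=(\psi_A^+,\psi_B^+)$. Then $$c_\kappa(\psi^+)=c_\kappa(\psi_A^+)\,c_\kappa(\psi_B^+)-\binom{\kappa}{2}.$$
   Context: For a rooted binary topological tree $\psi^+$ on a taxon set $X$ and $\kappa\ge2$, consider real $|X|$-way $\kappa\times\cdots\times\kappa$ tensors $P$ with one index per taxon. For $Y\subseteq X$, $P_Y$ is the marginalization (sum over indices of taxa not in $Y$); $\psi^+|_Y$ is the induced rooted subtree; a 2-clade is a pair of leaves that are exactly the leaf descendants of some vertex. Let $L(\psi^+)\subseteq\mathbb R^{\kappa^{|X|}}$ be the linear space of all real tensors $P$ such that for every $Y\subseteq X$ and every 2-clade $\{a,b\}$ of $\psi^+|_Y$, $P_Y$ is invariant under exchanging the $a$ and $b$ indices, and let $c_\kappa(\psi^+)=\dim L(\psi^+)$. (Equivalently $c_\kappa(\psi^+)=d_\kappa(\psi^+)+1$, where $d_\kappa(\psi^+)$ is the dimension of the affine space of such tensors whose entries sum to 1, the affine closure of the UE model.) For a tree with a single leaf, $L$ is all of $\mathbb R^\kappa$, so $c_\kappa=\kappa$. *)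

theory Defs
  imports Complex_Main "HOL-Library.FuncSet" "HOL-Library.Function_Algebras"
begin

datatype 'a rtree = Leaf 'a | Node "'a rtree" "'a rtree"

fun leaves_list :: "'a rtree \<Rightarrow> 'a list" where
  "leaves_list (Leaf a) = [a]"
| "leaves_list (Node l r) = leaves_list l @ leaves_list r"

definition taxa :: "'a rtree \<Rightarrow> 'a set" where
  "taxa t = set (leaves_list t)"

definition wf_tree :: "'a rtree \<Rightarrow> bool" where
  "wf_tree t \<longleftrightarrow> distinct (leaves_list t)"

text \<open>Induced rooted subtree on Y (None if no leaf of the tree lies in Y);
  degree-2 vertices are suppressed.\<close>
fun restrict_tree :: "'a rtree \<Rightarrow> 'a set \<Rightarrow> 'a rtree option" where
  "restrict_tree (Leaf a) Y = (if a \<in> Y then Some (Leaf a) else None)"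
| "restrict_tree (Node l r) Y =
     (case (restrict_tree l Y, restrict_tree r Y) of
        (Some l', Some r') \<Rightarrow> Some (Node l' r')
      | (Some l', None) \<Rightarrow> Some l'
      | (None, Some r') \<Rightarrow> Some r'
      | (None, None) \<Rightarrow> None)"

fun subtrees :: "'a rtree \<Rightarrow> 'a rtree set" where
  "subtrees (Leaf a) = {Leaf a}"
| "subtrees (Node l r) = insert (Node l r) (subtrees l \<union> subtrees r)"

definition two_clade :: "'a rtree \<Rightarrow> 'a \<Rightarrow> 'a \<Rightarrow> bool" where
  "two_clade t a b \<longleftrightarrow> Node (Leaf a) (Leaf b) \<in> subtrees t \<or> Node (Leaf b) (Leaf a) \<in> subtrees t"

text \<open>Index set of a kappa x ... x kappa tensor with one index per taxon in X
  (states 0..kappa-1).\<close>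
definition indices :: "nat \<Rightarrow> 'a set \<Rightarrow> ('a \<Rightarrow> nat) set" where
  "indices \<kappa> X = PiE X (\<lambda>_. {..<\<kappa>})"

definition is_tensor :: "nat \<Rightarrow> 'a set \<Rightarrow> (('a \<Rightarrow> nat) \<Rightarrow> real) \<Rightarrow> bool" where
  "is_tensor \<kappa> X P \<longleftrightarrow> (\<forall>f. f \<notin> indices \<kappa> X \<longrightarrow> P f = 0)"

definition marg :: "nat \<Rightarrow> 'a set \<Rightarrow> 'a set \<Rightarrow> (('a \<Rightarrow> nat) \<Rightarrow> real) \<Rightarrow> ('a \<Rightarrow> nat) \<Rightarrow> real" where
  "marg \<kappa> X Y P f =
     (if f \<in> indices \<kappa> Y
      then (\<Sum>g\<in>indices \<kappa> (X - Y). P (\<lambda>x. if x \<in> Y then f x else g x))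
      else 0)"

definition swap_idx :: "'a \<Rightarrow> 'a \<Rightarrow> ('a \<Rightarrow> nat) \<Rightarrow> ('a \<Rightarrow> nat)" where
  "swap_idx a b f = f(a := f b, b := f a)"

definition Lspace :: "nat \<Rightarrow> 'a rtree \<Rightarrow> (('a \<Rightarrow> nat) \<Rightarrow> real) set" where
  "Lspace \<kappa> t = {P. is_tensor \<kappa> (taxa t) P \<and>
     (\<forall>Y t' a b. Y \<subseteq> taxa t \<longrightarrow> restrict_tree t Y = Some t' \<longrightarrow> two_clade t' a b \<longrightarrow>
        (\<forall>f. marg \<kappa> (taxa t) Y P f = marg \<kappa> (taxa t) Y P (swap_idx a b f)))}"

definition c_dim :: "nat \<Rightarrow> 'a rtree \<Rightarrow> nat" where
  "c_dim \<kappa> t = vector_space.dim (\<lambda>(c::real) (P::('a \<Rightarrow> nat) \<Rightarrow> real). (\<lambda>x. c * P x)) (Lspace \<kappa> t)"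

end

theory Submission
  imports Defs
begin

text \<open>Write \<open>A\<close> and \<open>B\<close> for the taxa of the two subtrees and view a tensor \<open>P\<close> on
  \<open>A \<union> B\<close> as a matrix whose rows and columns are index functions on \<open>A\<close> and on \<open>B\<close>.
  The 2-clades of induced subtrees of \<open>(\<psi>\<^sub>A, \<psi>\<^sub>B)\<close> either lie inside one side, or are a
  pair \<open>{a, b}\<close> with \<open>a \<in> A\<close>, \<open>b \<in> B\<close>. The first kind of condition says exactly that every column
  of \<open>P\<close> lies in \<open>L(\<psi>\<^sub>A)\<close> and every row in \<open>L(\<psi>\<^sub>B)\<close>; these tensors form
  \<open>L(\<psi>\<^sub>A) \<otimes> L(\<psi>\<^sub>B)\<close>, of dimension \<open>c(\<psi>\<^sub>A) c(\<psi>\<^sub>B)\<close>. Since in a tensor of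
  \<open>L(\<psi>)\<close> all one-leaf marginals coincide, the second kind reduces to symmetry of the
  two-leaf marginal at a single pair \<open>(a\<^sub>0, b\<^sub>0)\<close>. This imposes \<open>\<kappa> choose 2\<close>
  independent linear conditions: the tensors \<open>\<delta>(s\<^sup>A t\<^sup>B) - \<delta>(t\<^sup>A s\<^sup>B)\<close>
  (constant index \<open>s\<close> on \<open>A\<close> and \<open>t\<close> on \<open>B\<close>, and vice versa), \<open>s < t\<close>, lie in the
  tensor product and span a complement of \<open>L(\<psi>)\<close> in it.\<close>

section \<open>Real-valued functions as a vector space\<close>

definition fscale :: "real \<Rightarrow> ('b \<Rightarrow> real) \<Rightarrow> 'b \<Rightarrow> real" where
  "fscale c P = (\<lambda>x. c * P x)"

interpretation V: vector_space fscale
  by unfold_locales (auto simp: fscale_def fun_eq_iff algebra_simps)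

lemma c_dim_eq_dim: "c_dim \<kappa> t = V.dim (Lspace \<kappa> t)"
  unfolding c_dim_def fscale_def[abs_def] ..

lemma fscale_apply [simp]: "fscale c P x = c * P x"
  by (simp add: fscale_def)

lemma sum_fun_apply: "(\<Sum>i\<in>I. F i) x = (\<Sum>i\<in>I. F i x)"
  by (induct I rule: infinite_finite_induct) auto

lemma finite_basis_in_span:
  assumes "L \<subseteq> V.span F" "finite F"
  obtains B where "B \<subseteq> L" "V.independent B" "L \<subseteq> V.span B" "card B = V.dim L" "finite B"
proof -
  obtain B where B: "B \<subseteq> L" "V.independent B" "L \<subseteq> V.span B" "card B = V.dim L"
    by (rule V.basis_exists)
  have "finite B"
    using V.independent_span_bound[OF assms(2) B(2)] B(1) assms(1) by blast
  with B that show ?thesis by blast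
qed

lemma independent_family:
  assumes fin: "finite I" and trivial: "\<And>c. (\<Sum>i\<in>I. fscale (c i) (v i)) = 0 \<Longrightarrow> \<forall>i\<in>I. c i = 0"
  shows "inj_on v I" "V.independent (v ` I)"
proof -
  show inj: "inj_on v I"
  proof (rule inj_onI, rule ccontr)
    fix i j assume ij: "i \<in> I" "j \<in> I" "v i = v j" "i \<noteq> j"
    define c where "c = (\<lambda>k. if k = i then (1::real) else if k = j then -1 else 0)"
    have "(\<Sum>k\<in>I. fscale (c k) (v k)) = (\<Sum>k\<in>I. (if k = i then v i else 0) - (if k = j then v j else 0))"
      using ij(4) by (intro sum.cong refl) (auto simp: c_def fun_eq_iff)
    also have "\<dots> = 0"
      using fin ij by (simp add: sum_subtractf)
    finally have "c i = 0"
      using trivial ij by blast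
    then show False
      by (simp add: c_def)
  qed
  show "V.independent (v ` I)"
  proof (rule V.independent_if_scalars_zero)
    show "finite (v ` I)"
      using fin by simp
    fix f x assume s: "(\<Sum>x\<in>v ` I. fscale (f x) x) = 0" and x: "x \<in> v ` I"
    have "(\<Sum>i\<in>I. fscale (f (v i)) (v i)) = 0"
      using s by (simp add: sum.reindex[OF inj])
    then have "\<forall>i\<in>I. f (v i) = 0"
      by (rule trivial)
    then show "f x = 0"
      using x by blast
  qed
qed

lemma independent_Un_trivial_span_Int:
  assumes S: "V.independent S" "finite S" and T: "V.independent T" "finite T"
    and ST: "V.span S \<inter> V.span T \<subseteq> {0}"
  shows "V.independent (S \<union> T)" "S \<inter> T = {}"
proof -
  show disj: "S \<inter> T = {}"
    using ST V.span_base V.dependent_zero[of S] S(1) by blast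
  show "V.independent (S \<union> T)"
  proof (rule V.independent_if_scalars_zero)
    show "finite (S \<union> T)"
      using S T by simp
    fix f x assume s: "(\<Sum>x\<in>S \<union> T. fscale (f x) x) = 0" and x: "x \<in> S \<union> T"
    define u where "u = (\<Sum>x\<in>S. fscale (f x) x)"
    have "u + (\<Sum>x\<in>T. fscale (f x) x) = 0"
      using s by (simp add: u_def sum.union_disjoint[OF S(2) T(2) disj])
    then have u: "u = - (\<Sum>x\<in>T. fscale (f x) x)"
      by (simp add: eq_neg_iff_add_eq_0)
    have "u \<in> V.span S"
      unfolding u_def by (intro V.span_sum V.span_scale V.span_base)
    moreover have "u \<in> V.span T"
      unfolding u by (intro V.span_neg V.span_sum V.span_scale V.span_base)
    ultimately have "u = 0"
      using ST by blast
    then have "(\<Sum>x\<in>S. fscale (f x) x) = 0" "(\<Sum>x\<in>T. fscale (f x) x) = 0"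
      using u by (simp_all add: u_def)
    then show "f x = 0"
      using x V.independentD[OF S(1) S(2) subset_refl] V.independentD[OF T(1) T(2) subset_refl] by blast
  qed
qed

lemma dim_direct_sum:
  assumes L: "V.subspace L" "L \<subseteq> M" "L \<subseteq> V.span F" "finite F"
    and E: "E \<subseteq> M" "V.independent E" "finite E"
    and trivial_Int: "V.span E \<inter> L \<subseteq> {0}" and spanning: "M \<subseteq> V.span (L \<union> E)"
  shows "V.dim M = V.dim L + card E"
proof -
  obtain BL where BL: "BL \<subseteq> L" "V.independent BL" "L \<subseteq> V.span BL" "card BL = V.dim L" "finite BL"
    using finite_basis_in_span[OF L(3,4)] by blast
  have "V.span BL \<subseteq> L"
    using V.span_minimal[OF BL(1) L(1)] .
  then have "V.span BL \<inter> V.span E \<subseteq> {0}"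
    using trivial_Int by blast
  note indep = independent_Un_trivial_span_Int[OF BL(2,5) E(2,3) this]
  have "L \<union> E \<subseteq> V.span (BL \<union> E)"
    using BL(3) V.span_mono[of BL "BL \<union> E"] V.span_base[of _ "BL \<union> E"] by blast
  then have "M \<subseteq> V.span (BL \<union> E)"
    using spanning V.span_minimal[OF _ V.subspace_span] by blast
  then have "card (BL \<union> E) = V.dim M"
    using V.basis_card_eq_dim[OF _ _ indep(1)] BL(1) L(2) E(1) by blast
  then show ?thesis
    using card_Un_disjoint[OF BL(5) E(3) indep(2)] BL(4) by simp
qed

section \<open>Index functions and marginalization\<close>

definition glue :: "'a set \<Rightarrow> ('a \<Rightarrow> nat) \<Rightarrow> ('a \<Rightarrow> nat) \<Rightarrow> 'a \<Rightarrow> nat" where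
  "glue Y f g = (\<lambda>x. if x \<in> Y then f x else g x)"

lemma finite_indices: "finite S \<Longrightarrow> finite (indices \<kappa> S)"
  unfolding indices_def by (simp add: finite_PiE)

lemma glue_in_indices:
  "A \<inter> B = {} \<Longrightarrow> g \<in> indices \<kappa> A \<Longrightarrow> h \<in> indices \<kappa> B \<Longrightarrow> glue A g h \<in> indices \<kappa> (A \<union> B)"
  unfolding indices_def glue_def by (auto simp: PiE_iff extensional_def)

lemma restrict_glue_left: "g \<in> indices \<kappa> A \<Longrightarrow> restrict (glue A g h) A = g"
  unfolding indices_def glue_def by (auto simp: fun_eq_iff PiE_iff extensional_def)

lemma restrict_glue_right: "A \<inter> B = {} \<Longrightarrow> h \<in> indices \<kappa> B \<Longrightarrow> restrict (glue A g h) B = h"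
  unfolding indices_def glue_def by (auto simp: fun_eq_iff PiE_iff extensional_def)

lemma glue_restrict: "f \<in> indices \<kappa> (A \<union> B) \<Longrightarrow> glue A (restrict f A) (restrict f B) = f"
  unfolding indices_def glue_def by (auto simp: fun_eq_iff PiE_iff extensional_def)

lemma restrict_in_indices: "f \<in> indices \<kappa> X \<Longrightarrow> Y \<subseteq> X \<Longrightarrow> restrict f Y \<in> indices \<kappa> Y"
  unfolding indices_def by (auto simp: PiE_iff)

lemma glue_commute:
  "A \<inter> B = {} \<Longrightarrow> g \<in> indices \<kappa> A \<Longrightarrow> h \<in> indices \<kappa> B \<Longrightarrow> glue B h g = glue A g h"
  unfolding indices_def glue_def by (auto simp: fun_eq_iff PiE_iff extensional_def)

lemma bij_betw_glue:
  assumes "A \<inter> B = {}"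
  shows "bij_betw (\<lambda>(g, h). glue A g h) (indices \<kappa> A \<times> indices \<kappa> B) (indices \<kappa> (A \<union> B))"
proof (rule bij_betw_byWitness[where f'="\<lambda>F. (restrict F A, restrict F B)"])
  show "\<forall>x\<in>indices \<kappa> A \<times> indices \<kappa> B. (\<lambda>F. (restrict F A, restrict F B)) ((\<lambda>(g, h). glue A g h) x) = x"
    using assms by (auto simp: restrict_glue_left restrict_glue_right)
qed (auto simp: glue_restrict glue_in_indices[OF assms] intro: restrict_in_indices)

lemma sum_indices_Un:
  assumes "A \<inter> B = {}" "finite A" "finite B"
  shows "(\<Sum>F\<in>indices \<kappa> (A \<union> B). G F) = (\<Sum>h\<in>indices \<kappa> B. \<Sum>g\<in>indices \<kappa> A. G (glue A g h))"
proof -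
  have "(\<Sum>F\<in>indices \<kappa> (A \<union> B). G F) = (\<Sum>(g, h)\<in>indices \<kappa> A \<times> indices \<kappa> B. G (glue A g h))"
    using sum.reindex_bij_betw[OF bij_betw_glue[OF assms(1)], of G] by (simp add: case_prod_unfold)
  also have "\<dots> = (\<Sum>g\<in>indices \<kappa> A. \<Sum>h\<in>indices \<kappa> B. G (glue A g h))"
    by (simp add: sum.cartesian_product)
  also have "\<dots> = (\<Sum>h\<in>indices \<kappa> B. \<Sum>g\<in>indices \<kappa> A. G (glue A g h))"
    by (rule sum.swap)
  finally show ?thesis .
qed

lemma marg_eq_sum_restrict:
  assumes "finite X" "Y \<subseteq> X" "f \<in> indices \<kappa> Y"
  shows "marg \<kappa> X Y P f = (\<Sum>F\<in>indices \<kappa> X. if restrict F Y = f then P F else 0)"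
proof -
  have XY: "Y \<union> (X - Y) = X"
    using assms by auto
  have bij: "bij_betw (glue Y f) (indices \<kappa> (X - Y)) {F \<in> indices \<kappa> X. restrict F Y = f}"
  proof (rule bij_betw_byWitness[where f'="\<lambda>F. restrict F (X - Y)"])
    show "\<forall>g\<in>indices \<kappa> (X - Y). restrict (glue Y f g) (X - Y) = g"
      by (simp add: restrict_glue_right)
    show "\<forall>F\<in>{F \<in> indices \<kappa> X. restrict F Y = f}. glue Y f (restrict F (X - Y)) = F"
      using glue_restrict[of _ \<kappa> Y "X - Y"] XY by auto
    show "glue Y f ` indices \<kappa> (X - Y) \<subseteq> {F \<in> indices \<kappa> X. restrict F Y = f}"
      using glue_in_indices[of Y "X - Y" f \<kappa>] XY restrict_glue_left[OF assms(3)] assms(3) by auto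
  qed (auto intro: restrict_in_indices)
  have "marg \<kappa> X Y P f = (\<Sum>g\<in>indices \<kappa> (X - Y). P (glue Y f g))"
    using assms by (simp add: marg_def glue_def)
  also have "\<dots> = (\<Sum>F\<in>{F \<in> indices \<kappa> X. restrict F Y = f}. P F)"
    using bij by (rule sum.reindex_bij_betw)
  also have "\<dots> = (\<Sum>F\<in>indices \<kappa> X. if restrict F Y = f then P F else 0)"
    using assms(1) by (simp add: sum.inter_filter finite_indices)
  finally show ?thesis .
qed

lemma marg_marg:
  assumes "finite X" "Y \<subseteq> Z" "Z \<subseteq> X"
  shows "marg \<kappa> Z Y (marg \<kappa> X Z P) = marg \<kappa> X Y P"
proof
  fix f
  show "marg \<kappa> Z Y (marg \<kappa> X Z P) f = marg \<kappa> X Y P f"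
  proof (cases "f \<in> indices \<kappa> Y")
    case False
    then show ?thesis
      by (simp add: marg_def)
  next
    case True
    have finZ: "finite Z"
      using assms finite_subset by blast
    have "marg \<kappa> Z Y (marg \<kappa> X Z P) f
        = (\<Sum>G\<in>indices \<kappa> Z. if restrict G Y = f then (\<Sum>F\<in>indices \<kappa> X. if restrict F Z = G then P F else 0) else 0)"
      unfolding marg_eq_sum_restrict[OF finZ assms(2) True]
      by (intro sum.cong refl) (simp add: marg_eq_sum_restrict[OF assms(1,3)])
    also have "\<dots> = (\<Sum>G\<in>indices \<kappa> Z. \<Sum>F\<in>indices \<kappa> X. if restrict F Z = G \<and> restrict G Y = f then P F else 0)"
      by (intro sum.cong refl) auto
    also have "\<dots> = (\<Sum>F\<in>indices \<kappa> X. \<Sum>G\<in>indices \<kappa> Z. if restrict F Z = G \<and> restrict G Y = f then P F else 0)"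
      by (rule sum.swap)
    also have "\<dots> = (\<Sum>F\<in>indices \<kappa> X. if restrict F Y = f then P F else 0)"
    proof (intro sum.cong refl)
      fix F assume F: "F \<in> indices \<kappa> X"
      have "restrict (restrict F Z) Y = restrict F Y"
        using assms(2) by (auto simp: fun_eq_iff restrict_def)
      then have "(\<Sum>G\<in>indices \<kappa> Z. if restrict F Z = G \<and> restrict G Y = f then P F else 0)
          = (\<Sum>G\<in>indices \<kappa> Z. if G = restrict F Z then (if restrict F Y = f then P F else 0) else 0)"
        by (intro sum.cong refl) auto
      also have "\<dots> = (if restrict F Y = f then P F else 0)"
        using restrict_in_indices[OF F assms(3)] finZ by (simp add: finite_indices)
      finally show "(\<Sum>G\<in>indices \<kappa> Z. if restrict F Z = G \<and> restrict G Y = f then P F else 0)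
          = (if restrict F Y = f then P F else 0)" .
    qed
    also have "\<dots> = marg \<kappa> X Y P f"
      using marg_eq_sum_restrict[OF assms(1) _ True] assms by simp
    finally show ?thesis .
  qed
qed

lemma marg_add: "marg \<kappa> X Y (P + Q) = marg \<kappa> X Y P + marg \<kappa> X Y Q"
  by (auto simp: fun_eq_iff marg_def sum.distrib)

lemma marg_fscale: "marg \<kappa> X Y (fscale c P) = fscale c (marg \<kappa> X Y P)"
  by (auto simp: fun_eq_iff marg_def sum_distrib_left)

lemma marg_zero: "marg \<kappa> X Y 0 = 0"
  by (auto simp: fun_eq_iff marg_def)

lemma swap_idx_swap_idx [simp]: "swap_idx a b (swap_idx a b f) = f"
  unfolding swap_idx_def by (auto simp: fun_eq_iff)

lemma swap_idx_commute: "swap_idx a b = swap_idx b a"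
  unfolding swap_idx_def by (auto simp: fun_eq_iff)

lemma swap_idx_in_indices_iff:
  assumes "a \<in> Y" "b \<in> Y"
  shows "swap_idx a b f \<in> indices \<kappa> Y \<longleftrightarrow> f \<in> indices \<kappa> Y"
proof -
  have *: "swap_idx a b f \<in> indices \<kappa> Y" if "f \<in> indices \<kappa> Y" for f
    using that assms unfolding swap_idx_def indices_def by (auto simp: PiE_iff extensional_def)
  show ?thesis
    using *[of f] *[of "swap_idx a b f"] by auto
qed

lemma glue_swap_idx: "a \<in> Y \<Longrightarrow> b \<in> Y \<Longrightarrow> glue Y (swap_idx a b f) g = swap_idx a b (glue Y f g)"
  unfolding glue_def swap_idx_def by (auto simp: fun_eq_iff)

lemma marg_swap_idx:
  assumes "a \<in> Y" "b \<in> Y" "\<And>F. P (swap_idx a b F) = P F"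
  shows "marg \<kappa> X Y P (swap_idx a b f) = marg \<kappa> X Y P f"
  using assms unfolding marg_def by (simp add: swap_idx_in_indices_iff glue_swap_idx[unfolded glue_def])

definition delta :: "('a \<Rightarrow> nat) \<Rightarrow> ('a \<Rightarrow> nat) \<Rightarrow> real" where
  "delta p = (\<lambda>f. if f = p then 1 else 0)"

lemma delta_is_tensor: "p \<in> indices \<kappa> S \<Longrightarrow> is_tensor \<kappa> S (delta p)"
  unfolding is_tensor_def delta_def by auto

lemma tensor_eq_sum_delta:
  assumes "is_tensor \<kappa> S P" "finite S"
  shows "P = (\<Sum>p\<in>indices \<kappa> S. fscale (P p) (delta p))"
proof
  fix f
  have "(\<Sum>p\<in>indices \<kappa> S. fscale (P p) (delta p)) f = (\<Sum>p\<in>indices \<kappa> S. if p = f then P p else 0)"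
    unfolding sum_fun_apply by (intro sum.cong refl) (auto simp: delta_def)
  also have "\<dots> = P f"
    using assms unfolding is_tensor_def by (simp add: finite_indices)
  finally show "P f = (\<Sum>p\<in>indices \<kappa> S. fscale (P p) (delta p)) f" ..
qed

lemma tensor_in_span_delta: "is_tensor \<kappa> S P \<Longrightarrow> finite S \<Longrightarrow> P \<in> V.span (delta ` indices \<kappa> S)"
  by (subst tensor_eq_sum_delta) (auto intro: V.span_sum V.span_scale V.span_base)

lemma finite_basis_tensors:
  assumes "L \<subseteq> {P. is_tensor \<kappa> S P}" "finite S"
  obtains B where "B \<subseteq> L" "V.independent B" "L \<subseteq> V.span B" "card B = V.dim L" "finite B"
proof (rule finite_basis_in_span)
  show "L \<subseteq> V.span (delta ` indices \<kappa> S)"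
    using assms tensor_in_span_delta by blast
qed (use assms in \<open>simp_all add: finite_indices\<close>)

lemma marg_delta:
  assumes "finite X" "Y \<subseteq> X" "p \<in> indices \<kappa> X"
  shows "marg \<kappa> X Y (delta p) f = (if f \<in> indices \<kappa> Y \<and> restrict p Y = f then 1 else 0)"
proof (cases "f \<in> indices \<kappa> Y")
  case True
  have "marg \<kappa> X Y (delta p) f = (\<Sum>F\<in>indices \<kappa> X. if F = p then (if restrict F Y = f then 1 else 0) else 0)"
    unfolding marg_eq_sum_restrict[OF assms(1,2) True] by (intro sum.cong refl) (auto simp: delta_def)
  with True assms show ?thesis
    by (simp add: finite_indices)
qed (simp add: marg_def)

section \<open>Induced subtrees and the space \<open>L\<close>\<close>

lemma taxa_Leaf [simp]: "taxa (Leaf a) = {a}"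
  by (simp add: taxa_def)

lemma taxa_Node [simp]: "taxa (Node l r) = taxa l \<union> taxa r"
  by (simp add: taxa_def)

lemma finite_taxa: "finite (taxa t)"
  by (simp add: taxa_def)

lemma taxa_nonempty: "taxa t \<noteq> {}"
  by (induct t) auto

lemma wf_tree_Node: "wf_tree (Node l r) \<longleftrightarrow> wf_tree l \<and> wf_tree r \<and> taxa l \<inter> taxa r = {}"
  by (simp add: wf_tree_def taxa_def)

lemma restrict_tree_eq_None_iff: "restrict_tree t Y = None \<longleftrightarrow> Y \<inter> taxa t = {}"
  by (induct t) (auto split: option.splits)

lemma taxa_restrict_tree: "restrict_tree t Y = Some t' \<Longrightarrow> taxa t' = Y \<inter> taxa t"
  by (induct t arbitrary: t') (auto split: option.splits if_splits simp: restrict_tree_eq_None_iff)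

lemma restrict_tree_superset: "taxa t \<subseteq> Y \<Longrightarrow> restrict_tree t Y = Some t"
  by (induct t) auto

lemma restrict_tree_cong: "Y \<inter> taxa t = Z \<inter> taxa t \<Longrightarrow> restrict_tree t Y = restrict_tree t Z"
proof (induct t)
  case (Leaf x)
  then show ?case
    by auto
next
  case (Node l r)
  have "Y \<inter> taxa l = Z \<inter> taxa l" "Y \<inter> taxa r = Z \<inter> taxa r"
    using Node.prems by auto
  then show ?case
    using Node.hyps by simp
qed

lemma restrict_tree_singleton:
  "wf_tree t \<Longrightarrow> Y \<inter> taxa t = {x} \<Longrightarrow> restrict_tree t Y = Some (Leaf x)"
proof (induct t)
  case (Leaf a)
  then have "x \<in> Y \<inter> {a}"
    by simp
  then show ?case
    by auto
next
  case (Node l r)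
  have wf: "wf_tree l" "wf_tree r" "taxa l \<inter> taxa r = {}"
    using Node.prems(1) by (simp_all add: wf_tree_Node)
  show ?case
  proof (cases "x \<in> taxa l")
    case True
    then have "Y \<inter> taxa l = {x}" "Y \<inter> taxa r = {}"
      using Node.prems(2) wf(3) by auto
    then show ?thesis
      using Node.hyps wf by (simp add: restrict_tree_eq_None_iff[symmetric])
  next
    case False
    then have "Y \<inter> taxa r = {x}" "Y \<inter> taxa l = {}"
      using Node.prems(2) by auto
    then show ?thesis
      using Node.hyps wf by (simp add: restrict_tree_eq_None_iff[symmetric])
  qed
qed

lemma two_clade_Node:
  "two_clade (Node l r) a b \<longleftrightarrow>
     (l = Leaf a \<and> r = Leaf b) \<or> (l = Leaf b \<and> r = Leaf a) \<or> two_clade l a b \<or> two_clade r a b"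
  unfolding two_clade_def by auto

lemma taxa_subtree: "s \<in> subtrees t \<Longrightarrow> taxa s \<subseteq> taxa t"
  by (induct t) auto

lemma two_clade_taxa: "two_clade t a b \<Longrightarrow> a \<in> taxa t \<and> b \<in> taxa t"
  unfolding two_clade_def using taxa_subtree by fastforce

lemma two_clade_restrict_pair:
  "wf_tree t \<Longrightarrow> a \<in> taxa t \<Longrightarrow> b \<in> taxa t \<Longrightarrow> a \<noteq> b \<Longrightarrow>
   \<exists>t'. restrict_tree t {a, b} = Some t' \<and> two_clade t' a b"
proof (induct t)
  case (Leaf x)
  then show ?case
    by auto
next
  case (Node l r)
  have wf: "wf_tree l" "wf_tree r" "taxa l \<inter> taxa r = {}"
    using Node.prems(1) by (simp_all add: wf_tree_Node)
  consider "a \<in> taxa l" "b \<in> taxa l" | "a \<in> taxa r" "b \<in> taxa r"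
    | "a \<in> taxa l" "b \<in> taxa r" | "a \<in> taxa r" "b \<in> taxa l"
    using Node.prems by auto
  then show ?case
  proof cases
    case 1
    then obtain t' where "restrict_tree l {a, b} = Some t'" "two_clade t' a b"
      using Node.hyps(1) wf Node.prems by blast
    moreover have "restrict_tree r {a, b} = None"
      using 1 wf(3) by (auto simp: restrict_tree_eq_None_iff)
    ultimately show ?thesis
      by simp
  next
    case 2
    then obtain t' where "restrict_tree r {a, b} = Some t'" "two_clade t' a b"
      using Node.hyps(2) wf Node.prems by blast
    moreover have "restrict_tree l {a, b} = None"
      using 2 wf(3) by (auto simp: restrict_tree_eq_None_iff)
    ultimately show ?thesis
      by simp
  next
    case 3
    have "restrict_tree l {a, b} = Some (Leaf a)" "restrict_tree r {a, b} = Some (Leaf b)"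
      using 3 wf by (auto intro!: restrict_tree_singleton)
    then show ?thesis
      by (simp add: two_clade_Node)
  next
    case 4
    have "restrict_tree l {a, b} = Some (Leaf b)" "restrict_tree r {a, b} = Some (Leaf a)"
      using 4 wf by (auto intro!: restrict_tree_singleton)
    then show ?thesis
      by (simp add: two_clade_Node)
  qed
qed

lemma restrict_tree_Node_two_clade_cases:
  assumes "Y \<subseteq> taxa (Node l r)" "restrict_tree (Node l r) Y = Some t'" "two_clade t' a b"
  obtains l' where "restrict_tree l Y = Some l'" "two_clade l' a b"
    | r' where "restrict_tree r Y = Some r'" "two_clade r' a b"
    | "Y = {a, b}" "a \<in> taxa l" "b \<in> taxa r"
    | "Y = {a, b}" "b \<in> taxa l" "a \<in> taxa r"
proof (cases "restrict_tree l Y"; cases "restrict_tree r Y")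
  fix l' r' assume l': "restrict_tree l Y = Some l'" and r': "restrict_tree r Y = Some r'"
  have Y: "Y = taxa l' \<union> taxa r'" and taxa: "taxa l' \<subseteq> taxa l" "taxa r' \<subseteq> taxa r"
    using taxa_restrict_tree[OF l'] taxa_restrict_tree[OF r'] assms(1) by auto
  from assms(2,3) l' r'
  consider "l' = Leaf a" "r' = Leaf b" | "l' = Leaf b" "r' = Leaf a" | "two_clade l' a b" | "two_clade r' a b"
    by (auto simp: two_clade_Node)
  then show thesis
    by cases (use that l' r' Y taxa in auto)
qed (use assms that in auto)

lemma Lspace_is_tensor: "P \<in> Lspace \<kappa> t \<Longrightarrow> is_tensor \<kappa> (taxa t) P"
  unfolding Lspace_def by blast

lemma Lspace_swap_idx:
  assumes "P \<in> Lspace \<kappa> t" "Y \<subseteq> taxa t" "restrict_tree t Y = Some t'" "two_clade t' a b"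
  shows "marg \<kappa> (taxa t) Y P (swap_idx a b f) = marg \<kappa> (taxa t) Y P f"
proof -
  have "\<forall>Y t' a b. Y \<subseteq> taxa t \<longrightarrow> restrict_tree t Y = Some t' \<longrightarrow> two_clade t' a b \<longrightarrow>
     (\<forall>f. marg \<kappa> (taxa t) Y P f = marg \<kappa> (taxa t) Y P (swap_idx a b f))"
    using assms(1) unfolding Lspace_def by blast
  with assms(2-4) show ?thesis
    by metis
qed

lemma LspaceI:
  assumes "is_tensor \<kappa> (taxa t) P"
    and "\<And>Y t' a b f. Y \<subseteq> taxa t \<Longrightarrow> restrict_tree t Y = Some t' \<Longrightarrow> two_clade t' a b \<Longrightarrow>
      marg \<kappa> (taxa t) Y P (swap_idx a b f) = marg \<kappa> (taxa t) Y P f"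
  shows "P \<in> Lspace \<kappa> t"
  unfolding Lspace_def using assms by (blast intro: sym)

lemma subspace_Lspace: "V.subspace (Lspace \<kappa> t)"
  unfolding V.subspace_def
proof (intro conjI ballI allI)
  show "0 \<in> Lspace \<kappa> t"
    by (rule LspaceI) (simp_all add: is_tensor_def marg_zero)
next
  fix P Q assume P: "P \<in> Lspace \<kappa> t" and Q: "Q \<in> Lspace \<kappa> t"
  show "P + Q \<in> Lspace \<kappa> t"
    using Lspace_is_tensor[OF P] Lspace_is_tensor[OF Q] Lspace_swap_idx[OF P] Lspace_swap_idx[OF Q]
    by (intro LspaceI) (simp_all add: is_tensor_def marg_add)
next
  fix c P assume P: "P \<in> Lspace \<kappa> t"
  show "fscale c P \<in> Lspace \<kappa> t"
    using Lspace_is_tensor[OF P] Lspace_swap_idx[OF P]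
    by (intro LspaceI) (simp_all add: is_tensor_def marg_fscale)
qed

lemma restrict_tree_Node_commute_two_clade:
  "(\<exists>t'. restrict_tree (Node l r) Y = Some t' \<and> two_clade t' a b) \<longleftrightarrow>
   (\<exists>t'. restrict_tree (Node r l) Y = Some t' \<and> two_clade t' a b)"
  by (auto split: option.splits simp: two_clade_Node)

lemma Lspace_Node_commute: "Lspace \<kappa> (Node l r) = Lspace \<kappa> (Node r l)"
proof -
  have "P \<in> Lspace \<kappa> (Node r l)" if P: "P \<in> Lspace \<kappa> (Node l r)" for l r P
  proof (rule LspaceI)
    show "is_tensor \<kappa> (taxa (Node r l)) P"
      using Lspace_is_tensor[OF P] by (simp add: Un_commute)
  next
    fix Y t' a b f
    assume Y: "Y \<subseteq> taxa (Node r l)" and "restrict_tree (Node r l) Y = Some t'" "two_clade t' a b"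
    then obtain t'' where "restrict_tree (Node l r) Y = Some t''" "two_clade t'' a b"
      using restrict_tree_Node_commute_two_clade[of l r Y a b] by blast
    moreover have "Y \<subseteq> taxa (Node l r)" "taxa (Node l r) = taxa (Node r l)"
      using Y by auto
    ultimately show "marg \<kappa> (taxa (Node r l)) Y P (swap_idx a b f) = marg \<kappa> (taxa (Node r l)) Y P f"
      using Lspace_swap_idx[OF P] by metis
  qed
  then show ?thesis
    by blast
qed

section \<open>Slices and two-leaf marginals\<close>

definition slice :: "nat \<Rightarrow> 'a set \<Rightarrow> 'a set \<Rightarrow> (('a \<Rightarrow> nat) \<Rightarrow> real) \<Rightarrow> ('a \<Rightarrow> nat) \<Rightarrow> ('a \<Rightarrow> nat) \<Rightarrow> real"
  where "slice \<kappa> A B P h = (\<lambda>g. if g \<in> indices \<kappa> A \<and> h \<in> indices \<kappa> B then P (glue A g h) else 0)"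

lemma slice_is_tensor: "is_tensor \<kappa> A (slice \<kappa> A B P h)"
  unfolding is_tensor_def slice_def by simp

lemma slice_commute: "A \<inter> B = {} \<Longrightarrow> slice \<kappa> A B P h g = slice \<kappa> B A P g h"
  unfolding slice_def by (auto simp: glue_commute)

lemma slice_add: "slice \<kappa> A B (P + Q) h = slice \<kappa> A B P h + slice \<kappa> A B Q h"
  by (auto simp: slice_def fun_eq_iff)

lemma slice_fscale: "slice \<kappa> A B (fscale c P) h = fscale c (slice \<kappa> A B P h)"
  by (auto simp: slice_def fun_eq_iff)

lemma slice_zero: "slice \<kappa> A B 0 h = 0"
  by (auto simp: slice_def fun_eq_iff)

lemma marg_slice:
  assumes "A \<inter> B = {}" "Y \<subseteq> A" "f \<in> indices \<kappa> Y" "h \<in> indices \<kappa> B"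
  shows "marg \<kappa> A Y (slice \<kappa> A B P h) f = marg \<kappa> (A \<union> B) (Y \<union> B) P (glue Y f h)"
proof -
  have YB: "Y \<inter> B = {}" "A \<union> B - (Y \<union> B) = A - Y" "Y \<union> (A - Y) = A"
    using assms by auto
  have "marg \<kappa> A Y (slice \<kappa> A B P h) f = (\<Sum>g\<in>indices \<kappa> (A - Y). slice \<kappa> A B P h (glue Y f g))"
    using assms(3) by (simp add: marg_def glue_def)
  also have "\<dots> = (\<Sum>g\<in>indices \<kappa> (A - Y). P (glue (Y \<union> B) (glue Y f h) g))"
  proof (intro sum.cong refl)
    fix g assume g: "g \<in> indices \<kappa> (A - Y)"
    have "glue Y f g \<in> indices \<kappa> A"
      using glue_in_indices[of Y "A - Y" f \<kappa> g] assms(3) g YB by simp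
    moreover have "glue A (glue Y f g) h = glue (Y \<union> B) (glue Y f h) g"
      using g assms unfolding glue_def indices_def by (auto simp: fun_eq_iff PiE_iff extensional_def)
    ultimately show "slice \<kappa> A B P h (glue Y f g) = P (glue (Y \<union> B) (glue Y f h) g)"
      using assms(4) by (simp add: slice_def)
  qed
  also have "\<dots> = marg \<kappa> (A \<union> B) (Y \<union> B) P (glue Y f h)"
    using glue_in_indices[OF YB(1) assms(3,4)] YB by (simp add: marg_def glue_def)
  finally show ?thesis .
qed

lemma Lspace_Node_slice:
  assumes wf: "wf_tree (Node tA tB)" and P: "P \<in> Lspace \<kappa> (Node tA tB)"
  shows "slice \<kappa> (taxa tA) (taxa tB) P h \<in> Lspace \<kappa> tA"
proof (rule LspaceI[OF slice_is_tensor])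
  let ?A = "taxa tA" and ?B = "taxa tB"
  have disj: "?A \<inter> ?B = {}"
    using wf by (simp add: wf_tree_Node)
  fix Y t' a b f assume Y: "Y \<subseteq> ?A" and r: "restrict_tree tA Y = Some t'" and c: "two_clade t' a b"
  have ab: "a \<in> Y" "b \<in> Y"
    using two_clade_taxa[OF c] taxa_restrict_tree[OF r] by auto
  show "marg \<kappa> ?A Y (slice \<kappa> ?A ?B P h) (swap_idx a b f) = marg \<kappa> ?A Y (slice \<kappa> ?A ?B P h) f"
  proof (cases "h \<in> indices \<kappa> ?B \<and> f \<in> indices \<kappa> Y")
    case False
    then show ?thesis
      by (auto simp: slice_def marg_def swap_idx_in_indices_iff[OF ab])
  next
    case True
    have "restrict_tree tA (Y \<union> ?B) = restrict_tree tA Y"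
      using disj Y by (intro restrict_tree_cong) blast
    then have "restrict_tree (Node tA tB) (Y \<union> ?B) = Some (Node t' tB)"
      using r restrict_tree_superset[of tB "Y \<union> ?B"] by simp
    moreover have "two_clade (Node t' tB) a b" "Y \<union> ?B \<subseteq> taxa (Node tA tB)"
      using c Y by (auto simp: two_clade_Node)
    ultimately have "marg \<kappa> (?A \<union> ?B) (Y \<union> ?B) P (swap_idx a b F) = marg \<kappa> (?A \<union> ?B) (Y \<union> ?B) P F" for F
      using Lspace_swap_idx[OF P] by simp
    moreover have "swap_idx a b f \<in> indices \<kappa> Y"
      using True swap_idx_in_indices_iff[OF ab] by auto
    ultimately show ?thesis
      using True marg_slice[OF disj Y, of "swap_idx a b f" \<kappa> h P] marg_slice[OF disj Y, of f \<kappa> h P]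
      by (simp add: glue_swap_idx[OF ab])
  qed
qed

text \<open>The marginal to \<open>Y\<close> factors through the marginal to \<open>(Y \<inter> A) \<union> B\<close>, whose slices are
  marginals of the slices of \<open>P\<close>.\<close>

lemma marg_swap_idx_side_clade:
  assumes disj: "A \<inter> B = {}" and fin: "finite A" "finite B" and tA: "taxa tA = A"
    and slices: "\<And>h. slice \<kappa> A B P h \<in> Lspace \<kappa> tA"
    and Y: "Y \<subseteq> A \<union> B" and r: "restrict_tree tA Y = Some l'" and c: "two_clade l' a b"
  shows "marg \<kappa> (A \<union> B) Y P (swap_idx a b f) = marg \<kappa> (A \<union> B) Y P f"
proof -
  define YA where "YA = Y \<inter> A"
  define Z where "Z = YA \<union> B"
  have ab: "a \<in> YA" "b \<in> YA"
    using two_clade_taxa[OF c] taxa_restrict_tree[OF r] tA by (auto simp: YA_def)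
  have rA: "restrict_tree tA YA = Some l'"
    using r restrict_tree_cong[of Y tA YA] tA by (simp add: YA_def Int_assoc)
  have YA: "YA \<subseteq> A" "Y \<subseteq> Z" "Z \<subseteq> A \<union> B"
    using Y by (auto simp: Z_def YA_def)
  have symZ: "marg \<kappa> (A \<union> B) Z P (swap_idx a b F) = marg \<kappa> (A \<union> B) Z P F" for F
  proof (cases "F \<in> indices \<kappa> Z")
    case False
    have "a \<in> Z" "b \<in> Z"
      using ab by (auto simp: Z_def)
    with False show ?thesis
      by (simp add: marg_def swap_idx_in_indices_iff)
  next
    case True
    define g h where "g = restrict F YA" and "h = restrict F B"
    have gh: "g \<in> indices \<kappa> YA" "h \<in> indices \<kappa> B" "F = glue YA g h"
      using True restrict_in_indices[OF True] glue_restrict[of F \<kappa> YA B]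
      unfolding g_def h_def Z_def by auto
    have "swap_idx a b g \<in> indices \<kappa> YA"
      using gh(1) swap_idx_in_indices_iff[OF ab] by auto
    moreover have "marg \<kappa> A YA (slice \<kappa> A B P h) (swap_idx a b g) = marg \<kappa> A YA (slice \<kappa> A B P h) g"
      using Lspace_swap_idx[OF slices[of h] _ rA c] YA(1) tA by simp
    ultimately show ?thesis
      using marg_slice[OF disj YA(1) gh(1,2), of P] marg_slice[OF disj YA(1) _ gh(2), of "swap_idx a b g" P]
      by (simp add: gh(3) Z_def glue_swap_idx[OF ab])
  qed
  have "a \<in> Y" "b \<in> Y"
    using ab by (auto simp: YA_def)
  then have "marg \<kappa> Z Y (marg \<kappa> (A \<union> B) Z P) (swap_idx a b f) = marg \<kappa> Z Y (marg \<kappa> (A \<union> B) Z P) f"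
    by (rule marg_swap_idx[where P="marg \<kappa> (A \<union> B) Z P", OF _ _ symZ])
  then show ?thesis
    using marg_marg[OF _ YA(2,3)] fin by simp
qed

definition leaf_marg :: "nat \<Rightarrow> 'a set \<Rightarrow> (('a \<Rightarrow> nat) \<Rightarrow> real) \<Rightarrow> 'a \<Rightarrow> nat \<Rightarrow> real" where
  "leaf_marg \<kappa> X P a s = (\<Sum>F\<in>indices \<kappa> X. if F a = s then P F else 0)"

definition pair_marg :: "nat \<Rightarrow> 'a set \<Rightarrow> (('a \<Rightarrow> nat) \<Rightarrow> real) \<Rightarrow> 'a \<Rightarrow> 'a \<Rightarrow> nat \<Rightarrow> nat \<Rightarrow> real" where
  "pair_marg \<kappa> X P a b s t = (\<Sum>F\<in>indices \<kappa> X. if F a = s \<and> F b = t then P F else 0)"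

definition symmetric_pair_marg :: "nat \<Rightarrow> 'a set \<Rightarrow> (('a \<Rightarrow> nat) \<Rightarrow> real) \<Rightarrow> 'a \<Rightarrow> 'a \<Rightarrow> bool" where
  "symmetric_pair_marg \<kappa> X P a b \<longleftrightarrow> (\<forall>s<\<kappa>. \<forall>t<\<kappa>. pair_marg \<kappa> X P a b s t = pair_marg \<kappa> X P a b t s)"

definition pair_idx :: "'a \<Rightarrow> 'a \<Rightarrow> nat \<Rightarrow> nat \<Rightarrow> 'a \<Rightarrow> nat" where
  "pair_idx a b s t = (\<lambda>x. if x = a then s else if x = b then t else undefined)"

lemma pair_idx_in_indices: "s < \<kappa> \<Longrightarrow> t < \<kappa> \<Longrightarrow> pair_idx a b s t \<in> indices \<kappa> {a, b}"
  unfolding pair_idx_def indices_def by (auto simp: PiE_iff extensional_def)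

lemma indices_pair_eq_pair_idx:
  "f \<in> indices \<kappa> {a, b} \<Longrightarrow> a \<noteq> b \<Longrightarrow> f = pair_idx a b (f a) (f b) \<and> f a < \<kappa> \<and> f b < \<kappa>"
  unfolding pair_idx_def indices_def by (auto simp: fun_eq_iff PiE_iff extensional_def)

lemma swap_idx_pair_idx: "a \<noteq> b \<Longrightarrow> swap_idx a b (pair_idx a b s t) = pair_idx a b t s"
  unfolding swap_idx_def pair_idx_def by (auto simp: fun_eq_iff)

lemma marg_pair_idx:
  assumes "finite X" "a \<in> X" "b \<in> X" "a \<noteq> b" "s < \<kappa>" "t < \<kappa>"
  shows "marg \<kappa> X {a, b} P (pair_idx a b s t) = pair_marg \<kappa> X P a b s t"
proof -
  have "restrict F {a, b} = pair_idx a b s t \<longleftrightarrow> F a = s \<and> F b = t" for F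
    using assms(4) by (auto simp: fun_eq_iff restrict_def pair_idx_def)
  with assms show ?thesis
    by (simp add: marg_eq_sum_restrict pair_idx_in_indices pair_marg_def)
qed

lemma marg_pair_swap_idx_iff:
  assumes "finite X" "a \<in> X" "b \<in> X" "a \<noteq> b"
  shows "(\<forall>f. marg \<kappa> X {a, b} P (swap_idx a b f) = marg \<kappa> X {a, b} P f) \<longleftrightarrow>
         symmetric_pair_marg \<kappa> X P a b"
proof
  assume swap: "\<forall>f. marg \<kappa> X {a, b} P (swap_idx a b f) = marg \<kappa> X {a, b} P f"
  show "symmetric_pair_marg \<kappa> X P a b"
    unfolding symmetric_pair_marg_def
  proof (intro allI impI)
    fix s t assume st: "s < \<kappa>" "t < \<kappa>"
    have "marg \<kappa> X {a, b} P (swap_idx a b (pair_idx a b t s)) = marg \<kappa> X {a, b} P (pair_idx a b t s)"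
      using swap by blast
    then show "pair_marg \<kappa> X P a b s t = pair_marg \<kappa> X P a b t s"
      using marg_pair_idx[OF assms st] marg_pair_idx[OF assms st(2,1)] swap_idx_pair_idx[OF assms(4)]
      by simp
  qed
next
  assume sym: "symmetric_pair_marg \<kappa> X P a b"
  show "\<forall>f. marg \<kappa> X {a, b} P (swap_idx a b f) = marg \<kappa> X {a, b} P f"
  proof
    fix f
    show "marg \<kappa> X {a, b} P (swap_idx a b f) = marg \<kappa> X {a, b} P f"
    proof (cases "f \<in> indices \<kappa> {a, b}")
      case False
      then show ?thesis
        by (simp add: marg_def swap_idx_in_indices_iff)
    next
      case True
      then have f: "f = pair_idx a b (f a) (f b)" and st: "f a < \<kappa>" "f b < \<kappa>"
        using indices_pair_eq_pair_idx[OF _ assms(4)] by blast+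
      have "marg \<kappa> X {a, b} P (swap_idx a b (pair_idx a b (f a) (f b))) = marg \<kappa> X {a, b} P (pair_idx a b (f a) (f b))"
        using sym st marg_pair_idx[OF assms st] marg_pair_idx[OF assms st(2,1)]
        by (simp add: swap_idx_pair_idx[OF assms(4)] symmetric_pair_marg_def)
      with f show ?thesis
        by simp
    qed
  qed
qed

lemma pair_marg_commute: "pair_marg \<kappa> X P a b s t = pair_marg \<kappa> X P b a t s"
  unfolding pair_marg_def by (simp add: conj_commute)

lemma leaf_marg_eq_sum_pair_marg:
  assumes "finite X" "c \<in> X"
  shows "leaf_marg \<kappa> X P a s = (\<Sum>r<\<kappa>. pair_marg \<kappa> X P a c s r)"
proof -
  have "(\<Sum>r<\<kappa>. pair_marg \<kappa> X P a c s r) = (\<Sum>F\<in>indices \<kappa> X. \<Sum>r<\<kappa>. if F a = s \<and> F c = r then P F else 0)"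
    unfolding pair_marg_def by (rule sum.swap)
  also have "\<dots> = leaf_marg \<kappa> X P a s"
    unfolding leaf_marg_def
  proof (intro sum.cong refl)
    fix F assume "F \<in> indices \<kappa> X"
    then have "F c < \<kappa>"
      using assms(2) unfolding indices_def by auto
    have "(\<Sum>r<\<kappa>. if F a = s \<and> F c = r then P F else 0) = (\<Sum>r<\<kappa>. if F c = r then (if F a = s then P F else 0) else 0)"
      by (intro sum.cong refl) auto
    also have "\<dots> = (if F a = s then P F else 0)"
      using \<open>F c < \<kappa>\<close> by (simp add: sum.delta)
    finally show "(\<Sum>r<\<kappa>. if F a = s \<and> F c = r then P F else 0) = (if F a = s then P F else 0)" .
  qed
  finally show ?thesis
    by simp
qed

text \<open>In a tensor of \<open>L(t)\<close> every two-leaf marginal is symmetric, so summing it over one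
  argument shows that the one-leaf marginals agree at all leaves.\<close>

lemma Lspace_leaf_marg_eq:
  assumes wf: "wf_tree t" and P: "P \<in> Lspace \<kappa> t" and a: "a \<in> taxa t" "a' \<in> taxa t" and s: "s < \<kappa>"
  shows "leaf_marg \<kappa> (taxa t) P a s = leaf_marg \<kappa> (taxa t) P a' s"
proof (cases "a = a'")
  case False
  obtain t' where "restrict_tree t {a, a'} = Some t'" "two_clade t' a a'"
    using two_clade_restrict_pair[OF wf a False] by blast
  moreover have "{a, a'} \<subseteq> taxa t"
    using a by auto
  ultimately have "\<forall>f. marg \<kappa> (taxa t) {a, a'} P (swap_idx a a' f) = marg \<kappa> (taxa t) {a, a'} P f"
    using Lspace_swap_idx[OF P] by blast
  then have sym: "symmetric_pair_marg \<kappa> (taxa t) P a a'"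
    using marg_pair_swap_idx_iff[OF finite_taxa a False] by blast
  have "leaf_marg \<kappa> (taxa t) P a s = (\<Sum>r<\<kappa>. pair_marg \<kappa> (taxa t) P a a' s r)"
    by (rule leaf_marg_eq_sum_pair_marg[OF finite_taxa a(2)])
  also have "\<dots> = (\<Sum>r<\<kappa>. pair_marg \<kappa> (taxa t) P a' a s r)"
    using sym s unfolding symmetric_pair_marg_def by (intro sum.cong refl) (simp add: pair_marg_commute)
  also have "\<dots> = leaf_marg \<kappa> (taxa t) P a' s"
    by (rule leaf_marg_eq_sum_pair_marg[OF finite_taxa a(1), symmetric])
  finally show ?thesis .
qed simp

lemma pair_marg_eq_sum_slices:
  assumes disj: "A \<inter> B = {}" and fin: "finite A" "finite B" and ab: "a \<in> A" "b \<in> B"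
  shows "pair_marg \<kappa> (A \<union> B) P a b s t =
    (\<Sum>h\<in>indices \<kappa> B. if h b = t then leaf_marg \<kappa> A (slice \<kappa> A B P h) a s else 0)"
proof -
  have glue_ab: "glue A g h a = g a" "glue A g h b = h b" for g h
    using ab disj by (auto simp: glue_def)
  have "pair_marg \<kappa> (A \<union> B) P a b s t
      = (\<Sum>h\<in>indices \<kappa> B. \<Sum>g\<in>indices \<kappa> A. if g a = s \<and> h b = t then P (glue A g h) else 0)"
    unfolding pair_marg_def sum_indices_Un[OF disj fin] glue_ab ..
  also have "\<dots> = (\<Sum>h\<in>indices \<kappa> B. if h b = t then leaf_marg \<kappa> A (slice \<kappa> A B P h) a s else 0)"
    unfolding leaf_marg_def slice_def by (intro sum.cong refl) (auto intro: sum.cong)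
  finally show ?thesis .
qed

section \<open>The space \<open>L\<close> at the root\<close>

definition slicewise :: "nat \<Rightarrow> 'a set \<Rightarrow> 'a set \<Rightarrow> (('a \<Rightarrow> nat) \<Rightarrow> real) set \<Rightarrow>
    (('a \<Rightarrow> nat) \<Rightarrow> real) set \<Rightarrow> (('a \<Rightarrow> nat) \<Rightarrow> real) set" where
  "slicewise \<kappa> A B U W =
     {P. is_tensor \<kappa> (A \<union> B) P \<and> (\<forall>h. slice \<kappa> A B P h \<in> U) \<and> (\<forall>g. slice \<kappa> B A P g \<in> W)}"

lemma slicewise_commute: "A \<inter> B = {} \<Longrightarrow> slicewise \<kappa> A B U W = slicewise \<kappa> B A W U"
  unfolding slicewise_def by (auto simp: Un_commute)

lemma pair_marg_eq_change_leaf: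
  assumes disj: "A \<inter> B = {}" and fin: "finite A" "finite B"
    and tA: "wf_tree tA" "taxa tA = A" and slices: "\<And>h. slice \<kappa> A B P h \<in> Lspace \<kappa> tA"
    and a: "a \<in> A" "a' \<in> A" and b: "b \<in> B" and s: "s < \<kappa>"
  shows "pair_marg \<kappa> (A \<union> B) P a b s t = pair_marg \<kappa> (A \<union> B) P a' b s t"
proof -
  have "leaf_marg \<kappa> A (slice \<kappa> A B P h) a s = leaf_marg \<kappa> A (slice \<kappa> A B P h) a' s" for h
    using Lspace_leaf_marg_eq[OF tA(1) slices, of a a' s] a s tA(2) by simp
  then show ?thesis
    unfolding pair_marg_eq_sum_slices[OF disj fin a(1) b] pair_marg_eq_sum_slices[OF disj fin a(2) b]
    by (intro sum.cong refl) metis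
qed

lemma symmetric_pair_marg_transfer:
  assumes wf: "wf_tree (Node tA tB)"
    and P: "P \<in> slicewise \<kappa> (taxa tA) (taxa tB) (Lspace \<kappa> tA) (Lspace \<kappa> tB)"
    and a: "a \<in> taxa tA" "a0 \<in> taxa tA" and b: "b \<in> taxa tB" "b0 \<in> taxa tB"
    and sym: "symmetric_pair_marg \<kappa> (taxa tA \<union> taxa tB) P a0 b0"
  shows "symmetric_pair_marg \<kappa> (taxa tA \<union> taxa tB) P a b"
proof -
  let ?A = "taxa tA" and ?B = "taxa tB"
  have wf': "wf_tree tA" "wf_tree tB" "?A \<inter> ?B = {}" "?B \<inter> ?A = {}"
    using wf by (auto simp: wf_tree_Node)
  have P': "P \<in> slicewise \<kappa> ?B ?A (Lspace \<kappa> tB) (Lspace \<kappa> tA)"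
    using P slicewise_commute[OF wf'(3)] by blast
  have "pair_marg \<kappa> (?A \<union> ?B) P a b s t = pair_marg \<kappa> (?A \<union> ?B) P a0 b0 s t" if st: "s < \<kappa>" "t < \<kappa>" for s t
  proof -
    have "pair_marg \<kappa> (?A \<union> ?B) P a b s t = pair_marg \<kappa> (?A \<union> ?B) P a0 b s t"
      using P a b st by (intro pair_marg_eq_change_leaf[OF wf'(3) finite_taxa finite_taxa wf'(1) refl])
        (auto simp: slicewise_def)
    also have "\<dots> = pair_marg \<kappa> (?B \<union> ?A) P b a0 t s"
      unfolding Un_commute[of ?B ?A] by (rule pair_marg_commute)
    also have "\<dots> = pair_marg \<kappa> (?B \<union> ?A) P b0 a0 t s"
      using P' a b st by (intro pair_marg_eq_change_leaf[OF wf'(4) finite_taxa finite_taxa wf'(2) refl])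
        (auto simp: slicewise_def)
    also have "\<dots> = pair_marg \<kappa> (?A \<union> ?B) P a0 b0 s t"
      unfolding Un_commute[of ?B ?A] by (rule pair_marg_commute)
    finally show ?thesis .
  qed
  with sym show ?thesis
    unfolding symmetric_pair_marg_def by simp
qed

lemma Lspace_Node_subset:
  assumes wf: "wf_tree (Node tA tB)" and a0: "a0 \<in> taxa tA" and b0: "b0 \<in> taxa tB"
    and P: "P \<in> Lspace \<kappa> (Node tA tB)"
  shows "P \<in> slicewise \<kappa> (taxa tA) (taxa tB) (Lspace \<kappa> tA) (Lspace \<kappa> tB)"
    and "symmetric_pair_marg \<kappa> (taxa tA \<union> taxa tB) P a0 b0"
proof -
  have wf': "wf_tree tA" "wf_tree tB" "taxa tA \<inter> taxa tB = {}"
    using wf by (simp_all add: wf_tree_Node)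
  have "wf_tree (Node tB tA)"
    using wf' by (auto simp: wf_tree_Node)
  moreover have "P \<in> Lspace \<kappa> (Node tB tA)"
    using P Lspace_Node_commute[of \<kappa> tA tB] by simp
  ultimately have "slice \<kappa> (taxa tB) (taxa tA) P g \<in> Lspace \<kappa> tB" for g
    by (rule Lspace_Node_slice)
  then show "P \<in> slicewise \<kappa> (taxa tA) (taxa tB) (Lspace \<kappa> tA) (Lspace \<kappa> tB)"
    using Lspace_is_tensor[OF P] Lspace_Node_slice[OF wf P] by (simp add: slicewise_def)
  have "{a0, b0} \<inter> taxa tA = {a0}" "{a0, b0} \<inter> taxa tB = {b0}"
    using a0 b0 wf'(3) by auto
  then have "restrict_tree (Node tA tB) {a0, b0} = Some (Node (Leaf a0) (Leaf b0))"
    using restrict_tree_singleton[OF wf'(1)] restrict_tree_singleton[OF wf'(2)] by simp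
  moreover have "two_clade (Node (Leaf a0) (Leaf b0)) a0 b0" "{a0, b0} \<subseteq> taxa (Node tA tB)"
    using a0 b0 by (auto simp: two_clade_Node)
  ultimately have "\<forall>f. marg \<kappa> (taxa tA \<union> taxa tB) {a0, b0} P (swap_idx a0 b0 f) = marg \<kappa> (taxa tA \<union> taxa tB) {a0, b0} P f"
    using Lspace_swap_idx[OF P] by (metis taxa_Node)
  moreover have "finite (taxa tA \<union> taxa tB)" "a0 \<in> taxa tA \<union> taxa tB" "b0 \<in> taxa tA \<union> taxa tB" "a0 \<noteq> b0"
    using a0 b0 wf'(3) finite_taxa by auto
  ultimately show "symmetric_pair_marg \<kappa> (taxa tA \<union> taxa tB) P a0 b0"
    by (simp add: marg_pair_swap_idx_iff)
qed

lemma Lspace_NodeI: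
  assumes wf: "wf_tree (Node tA tB)" and a0: "a0 \<in> taxa tA" and b0: "b0 \<in> taxa tB"
    and P: "P \<in> slicewise \<kappa> (taxa tA) (taxa tB) (Lspace \<kappa> tA) (Lspace \<kappa> tB)"
    and sym: "symmetric_pair_marg \<kappa> (taxa tA \<union> taxa tB) P a0 b0"
  shows "P \<in> Lspace \<kappa> (Node tA tB)"
proof (rule LspaceI)
  let ?A = "taxa tA" and ?B = "taxa tB"
  have disj: "?A \<inter> ?B = {}" "?B \<inter> ?A = {}"
    using wf by (auto simp: wf_tree_Node)
  have slices: "\<And>h. slice \<kappa> ?A ?B P h \<in> Lspace \<kappa> tA" "\<And>g. slice \<kappa> ?B ?A P g \<in> Lspace \<kappa> tB"
    using P by (auto simp: slicewise_def)
  show "is_tensor \<kappa> (taxa (Node tA tB)) P"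
    using P by (simp add: slicewise_def)
  fix Y t' a b f
  assume Y: "Y \<subseteq> taxa (Node tA tB)" and clade: "restrict_tree (Node tA tB) Y = Some t'" "two_clade t' a b"
  have root: "marg \<kappa> (?A \<union> ?B) {a, b} P (swap_idx a b f) = marg \<kappa> (?A \<union> ?B) {a, b} P f"
    if "a \<in> ?A" "b \<in> ?B" for a b
  proof -
    have "symmetric_pair_marg \<kappa> (?A \<union> ?B) P a b"
      using symmetric_pair_marg_transfer[OF wf P that(1) a0 that(2) b0 sym] .
    moreover have "a \<noteq> b"
      using that disj by blast
    moreover have "finite (?A \<union> ?B)" "a \<in> ?A \<union> ?B" "b \<in> ?A \<union> ?B"
      using that finite_taxa by auto
    ultimately show ?thesis
      by (simp add: marg_pair_swap_idx_iff[symmetric])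
  qed
  from Y clade show "marg \<kappa> (taxa (Node tA tB)) Y P (swap_idx a b f) = marg \<kappa> (taxa (Node tA tB)) Y P f"
  proof (cases rule: restrict_tree_Node_two_clade_cases)
    case (1 l')
    then show ?thesis
      using marg_swap_idx_side_clade[OF disj(1) finite_taxa finite_taxa refl slices(1)] Y by simp
  next
    case (2 r')
    then show ?thesis
      using marg_swap_idx_side_clade[OF disj(2) finite_taxa finite_taxa refl slices(2)] Y
      by (simp add: Un_commute)
  next
    case 3
    then show ?thesis
      using root by simp
  next
    case 4
    then have "Y = {b, a}"
      by blast
    with 4 show ?thesis
      using root[of b a] swap_idx_commute[of a b] by simp
  qed
qed

lemma Lspace_Node_eq:
  assumes "wf_tree (Node tA tB)" "a0 \<in> taxa tA" "b0 \<in> taxa tB"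
  shows "Lspace \<kappa> (Node tA tB) = {P \<in> slicewise \<kappa> (taxa tA) (taxa tB) (Lspace \<kappa> tA) (Lspace \<kappa> tB).
    symmetric_pair_marg \<kappa> (taxa tA \<union> taxa tB) P a0 b0}"
  using Lspace_Node_subset[OF assms] Lspace_NodeI[OF assms] by blast

section \<open>Counting dimensions\<close>

definition tensor_prod :: "nat \<Rightarrow> 'a set \<Rightarrow> 'a set \<Rightarrow> (('a \<Rightarrow> nat) \<Rightarrow> real) \<Rightarrow> (('a \<Rightarrow> nat) \<Rightarrow> real) \<Rightarrow>
    ('a \<Rightarrow> nat) \<Rightarrow> real" where
  "tensor_prod \<kappa> A B p q = (\<lambda>f. if f \<in> indices \<kappa> (A \<union> B) then p (restrict f A) * q (restrict f B) else 0)"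

lemma tensor_prod_is_tensor: "is_tensor \<kappa> (A \<union> B) (tensor_prod \<kappa> A B p q)"
  unfolding is_tensor_def tensor_prod_def by auto

lemma tensor_prod_glue:
  "A \<inter> B = {} \<Longrightarrow> g \<in> indices \<kappa> A \<Longrightarrow> h \<in> indices \<kappa> B \<Longrightarrow> tensor_prod \<kappa> A B p q (glue A g h) = p g * q h"
  by (simp add: tensor_prod_def glue_in_indices restrict_glue_left restrict_glue_right)

lemma tensor_prod_sum_right:
  "tensor_prod \<kappa> A B p (\<Sum>w\<in>S. fscale (r w) w) = (\<Sum>w\<in>S. fscale (r w) (tensor_prod \<kappa> A B p w))"
  by (rule ext) (simp add: tensor_prod_def sum_fun_apply sum_distrib_left mult_ac)

lemma tensor_prod_in_span_image:
  assumes "finite S" "q \<in> V.span S"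
  shows "tensor_prod \<kappa> A B p q \<in> V.span (tensor_prod \<kappa> A B p ` S)"
proof -
  obtain r where "q = (\<Sum>w\<in>S. fscale (r w) w)"
    using assms V.span_finite by auto
  then have "tensor_prod \<kappa> A B p q = (\<Sum>w\<in>S. fscale (r w) (tensor_prod \<kappa> A B p w))"
    by (simp only: tensor_prod_sum_right)
  also have "\<dots> \<in> V.span (tensor_prod \<kappa> A B p ` S)"
    by (intro V.span_sum V.span_scale V.span_base imageI)
  finally show ?thesis .
qed

lemma slice_tensor_prod:
  assumes "A \<inter> B = {}" "is_tensor \<kappa> A p" "is_tensor \<kappa> B q"
  shows "slice \<kappa> A B (tensor_prod \<kappa> A B p q) h = fscale (q h) p"
    and "slice \<kappa> B A (tensor_prod \<kappa> A B p q) g = fscale (p g) q"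
proof -
  have "slice \<kappa> A B (tensor_prod \<kappa> A B p q) h g = p g * q h" for g h
    using assms unfolding is_tensor_def by (auto simp: slice_def tensor_prod_glue)
  then show "slice \<kappa> A B (tensor_prod \<kappa> A B p q) h = fscale (q h) p"
    by (simp add: fun_eq_iff mult.commute)
  show "slice \<kappa> B A (tensor_prod \<kappa> A B p q) g = fscale (p g) q"
    using slice_commute[OF assms(1), symmetric] \<open>\<And>g h. _ = p g * q h\<close> by (simp add: fun_eq_iff)
qed

lemma tensor_prod_delta:
  assumes disj: "A \<inter> B = {}" and p: "p \<in> indices \<kappa> A" and q: "q \<in> indices \<kappa> B"
  shows "tensor_prod \<kappa> A B (delta p) (delta q) = delta (glue A p q)"
proof
  fix f
  show "tensor_prod \<kappa> A B (delta p) (delta q) f = delta (glue A p q) f"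
  proof (cases "f \<in> indices \<kappa> (A \<union> B)")
    case True
    then have "f = glue A p q \<longleftrightarrow> restrict f A = p \<and> restrict f B = q"
      using glue_restrict restrict_glue_left[OF p] restrict_glue_right[OF disj q] by metis
    with True show ?thesis
      by (simp add: tensor_prod_def delta_def)
  next
    case False
    then show ?thesis
      using glue_in_indices[OF disj p q] by (auto simp: tensor_prod_def delta_def)
  qed
qed

lemma subspace_slicewise:
  assumes "V.subspace U" "V.subspace W"
  shows "V.subspace (slicewise \<kappa> A B U W)"
  using assms unfolding V.subspace_def slicewise_def is_tensor_def
  by (simp add: slice_zero slice_add slice_fscale)

lemma tensor_prod_in_slicewise:
  assumes "A \<inter> B = {}" "V.subspace U" "V.subspace W" "U \<subseteq> {P. is_tensor \<kappa> A P}" "W \<subseteq> {P. is_tensor \<kappa> B P}"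
    and "u \<in> U" "w \<in> W"
  shows "tensor_prod \<kappa> A B u w \<in> slicewise \<kappa> A B U W"
proof -
  have tensors: "is_tensor \<kappa> A u" "is_tensor \<kappa> B w"
    using assms by auto
  show ?thesis
    using V.subspace_scale[OF assms(2,6)] V.subspace_scale[OF assms(3,7)]
    by (simp add: slicewise_def slice_tensor_prod[OF assms(1) tensors] tensor_prod_is_tensor)
qed

lemma independent_tensor_prod:
  assumes disj: "A \<inter> B = {}"
    and BU: "V.independent BU" "finite BU" "BU \<subseteq> {P. is_tensor \<kappa> A P}"
    and BW: "V.independent BW" "finite BW" "BW \<subseteq> {P. is_tensor \<kappa> B P}"
    and zero: "(\<Sum>x\<in>BU \<times> BW. fscale (c x) (tensor_prod \<kappa> A B (fst x) (snd x))) = 0"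
  shows "\<forall>x\<in>BU \<times> BW. c x = 0"
proof -
  define d where "d u h = (\<Sum>w\<in>BW. c (u, w) * w h)" for u h
  have "(\<Sum>u\<in>BU. fscale (d u h) u) g = 0" for g h
  proof (cases "g \<in> indices \<kappa> A \<and> h \<in> indices \<kappa> B")
    case True
    have "(\<Sum>u\<in>BU. fscale (d u h) u) g = (\<Sum>(u, w)\<in>BU \<times> BW. c (u, w) * (u g * w h))"
      unfolding sum_fun_apply d_def sum.cartesian_product[symmetric]
      by (simp add: sum_distrib_left sum_distrib_right mult_ac)
    also have "\<dots> = (\<Sum>x\<in>BU \<times> BW. fscale (c x) (tensor_prod \<kappa> A B (fst x) (snd x))) (glue A g h)"
      unfolding sum_fun_apply using True disj by (simp add: tensor_prod_glue case_prod_unfold)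
    finally show ?thesis
      using zero by simp
  next
    case False
    have "fscale (d u h) u g = 0" if "u \<in> BU" for u
    proof (cases "g \<in> indices \<kappa> A")
      case True
      with False have "w h = 0" if "w \<in> BW" for w
        using that BW(3) unfolding is_tensor_def by blast
      then have "d u h = 0"
        unfolding d_def by (intro sum.neutral) simp
      then show ?thesis
        by simp
    next
      case False
      then show ?thesis
        using that BU(3) unfolding is_tensor_def by auto
    qed
    then show ?thesis
      unfolding sum_fun_apply by (intro sum.neutral) blast
  qed
  then have "d u h = 0" if "u \<in> BU" for u h
    using V.independentD[OF BU(1,2) subset_refl _ that, of "\<lambda>u. d u h"] by (auto simp: fun_eq_iff)
  then have "(\<Sum>w\<in>BW. fscale (c (u, w)) w) = 0" if "u \<in> BU" for u
    using that by (auto simp: fun_eq_iff sum_fun_apply d_def)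
  then have "c (u, w) = 0" if "u \<in> BU" "w \<in> BW" for u w
    using V.independentD[OF BW(1,2) subset_refl _ that(2), of "\<lambda>w. c (u, w)"] that(1) by blast
  then show ?thesis
    by auto
qed

text \<open>The coordinate function is a fixed linear combination of the \<open>B\<close>-slices of \<open>P\<close>.\<close>

lemma representation_slice_in_subspace:
  assumes disj: "A \<inter> B = {}" and finA: "finite A" and W: "V.subspace W"
    and slices: "\<And>g. slice \<kappa> B A P g \<in> W"
    and B': "V.independent B'" "{P. is_tensor \<kappa> A P} \<subseteq> V.span B'"
  shows "(\<lambda>h. V.representation B' (slice \<kappa> A B P h) u) \<in> W"
proof -
  have delta_span: "delta g \<in> V.span B'" if "g \<in> indices \<kappa> A" for g
    using B'(2) delta_is_tensor[OF that] by blast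
  have "slice \<kappa> A B P h = (\<Sum>g\<in>indices \<kappa> A. fscale (slice \<kappa> B A P g h) (delta g))" for h
    by (subst tensor_eq_sum_delta[OF slice_is_tensor finA]) (simp only: slice_commute[OF disj])
  then have "V.representation B' (slice \<kappa> A B P h) u =
      (\<Sum>g\<in>indices \<kappa> A. slice \<kappa> B A P g h * V.representation B' (delta g) u)" for h
    by (simp add: V.representation_sum[OF B'(1)] V.span_scale delta_span V.representation_scale[OF B'(1)])
  then have "(\<lambda>h. V.representation B' (slice \<kappa> A B P h) u) =
      (\<Sum>g\<in>indices \<kappa> A. fscale (V.representation B' (delta g) u) (slice \<kappa> B A P g))"
    by (intro ext) (simp add: sum_fun_apply mult.commute)
  also have "\<dots> \<in> W"
    by (intro V.subspace_sum[OF W] V.subspace_scale[OF W] slices)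
  finally show ?thesis .
qed

lemma slicewise_eq_sum_tensor_prod:
  assumes disj: "A \<inter> B = {}" and finA: "finite A"
    and U: "U \<subseteq> {P. is_tensor \<kappa> A P}" and W: "V.subspace W"
    and BU: "BU \<subseteq> U" "V.independent BU" "U \<subseteq> V.span BU" "finite BU"
    and P: "P \<in> slicewise \<kappa> A B U W"
  obtains c where "\<And>u. c u \<in> W" "P = (\<Sum>u\<in>BU. tensor_prod \<kappa> A B u (c u))"
proof -
  have "BU \<subseteq> {P. is_tensor \<kappa> A P}"
    using BU(1) U by blast
  then obtain B' where B': "BU \<subseteq> B'" "B' \<subseteq> {P. is_tensor \<kappa> A P}" "V.independent B'"
      "{P. is_tensor \<kappa> A P} \<subseteq> V.span B'"
    using V.maximal_independent_subset_extend[OF _ BU(2)] by blast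
  have PU: "slice \<kappa> A B P h \<in> U" and PW: "slice \<kappa> B A P g \<in> W" for g h
    using P by (auto simp: slicewise_def)
  define c where "c u = (\<lambda>h. V.representation B' (slice \<kappa> A B P h) u)" for u
  have expand: "slice \<kappa> A B P h = (\<Sum>u\<in>BU. fscale (c u h) u)" for h
  proof -
    have span: "slice \<kappa> A B P h \<in> V.span BU"
      using PU BU(3) by blast
    then have "V.representation B' (slice \<kappa> A B P h) = V.representation BU (slice \<kappa> A B P h)"
      by (rule V.representation_extend[OF B'(3) _ B'(1)])
    then show ?thesis
      unfolding c_def using V.sum_representation_eq[OF BU(2) span BU(4) subset_refl] by simp
  qed
  have "c u \<in> W" for u
    unfolding c_def using representation_slice_in_subspace[OF disj finA W PW B'(3,4)] .
  moreover have "P = (\<Sum>u\<in>BU. tensor_prod \<kappa> A B u (c u))"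
  proof
    fix f
    show "P f = (\<Sum>u\<in>BU. tensor_prod \<kappa> A B u (c u)) f"
    proof (cases "f \<in> indices \<kappa> (A \<union> B)")
      case True
      define g h where "g = restrict f A" and "h = restrict f B"
      have gh: "g \<in> indices \<kappa> A" "h \<in> indices \<kappa> B"
        using restrict_in_indices[OF True] unfolding g_def h_def by auto
      have "f = glue A g h"
        using glue_restrict[OF True] by (simp add: g_def h_def)
      then have "P f = slice \<kappa> A B P h g"
        using gh by (simp add: slice_def)
      also have "\<dots> = (\<Sum>u\<in>BU. c u h * u g)"
        unfolding expand[of h] sum_fun_apply by simp
      also have "\<dots> = (\<Sum>u\<in>BU. tensor_prod \<kappa> A B u (c u)) f"
        unfolding sum_fun_apply using True by (simp add: tensor_prod_def g_def h_def mult.commute)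
      finally show ?thesis .
    next
      case False
      then show ?thesis
        using P unfolding slicewise_def is_tensor_def sum_fun_apply by (simp add: tensor_prod_def)
    qed
  qed
  ultimately show thesis
    using that by blast
qed

lemma dim_slicewise:
  assumes disj: "A \<inter> B = {}" and fin: "finite A" "finite B"
    and U: "V.subspace U" "U \<subseteq> {P. is_tensor \<kappa> A P}"
    and W: "V.subspace W" "W \<subseteq> {P. is_tensor \<kappa> B P}"
  shows "V.dim (slicewise \<kappa> A B U W) = V.dim U * V.dim W"
proof -
  obtain BU where BU: "BU \<subseteq> U" "V.independent BU" "U \<subseteq> V.span BU" "card BU = V.dim U" "finite BU"
    using finite_basis_tensors[OF U(2) fin(1)] by blast
  obtain BW where BW: "BW \<subseteq> W" "V.independent BW" "W \<subseteq> V.span BW" "card BW = V.dim W" "finite BW"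
    using finite_basis_tensors[OF W(2) fin(2)] by blast
  define prod where "prod x = tensor_prod \<kappa> A B (fst x) (snd x)" for x
  have fin_prod: "finite (BU \<times> BW)"
    using BU(5) BW(5) by simp
  have "\<forall>x\<in>BU \<times> BW. c x = 0" if "(\<Sum>x\<in>BU \<times> BW. fscale (c x) (prod x)) = 0" for c
    using independent_tensor_prod[OF disj BU(2,5) _ BW(2,5)] BU(1) BW(1) U(2) W(2) that
    unfolding prod_def by blast
  note indep = independent_family[where v=prod, OF fin_prod this]
  have "tensor_prod \<kappa> A B u w \<in> slicewise \<kappa> A B U W" if "u \<in> BU" "w \<in> BW" for u w
    using tensor_prod_in_slicewise[OF disj U(1) W(1) U(2) W(2)] that BU(1) BW(1) by blast
  then have "prod ` (BU \<times> BW) \<subseteq> slicewise \<kappa> A B U W"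
    by (auto simp: prod_def)
  moreover have "slicewise \<kappa> A B U W \<subseteq> V.span (prod ` (BU \<times> BW))"
  proof
    fix P assume "P \<in> slicewise \<kappa> A B U W"
    then obtain c where c: "\<And>u. c u \<in> W" "P = (\<Sum>u\<in>BU. tensor_prod \<kappa> A B u (c u))"
      using slicewise_eq_sum_tensor_prod[OF disj fin(1) U(2) W(1) BU(1,2,3,5)] by blast
    have "tensor_prod \<kappa> A B u (c u) \<in> V.span (prod ` (BU \<times> BW))" if "u \<in> BU" for u
    proof -
      have "tensor_prod \<kappa> A B u w \<in> prod ` (BU \<times> BW)" if "w \<in> BW" for w
        using \<open>u \<in> BU\<close> that by (intro rev_image_eqI[of "(u, w)"]) (simp_all add: prod_def)
      then have "V.span (tensor_prod \<kappa> A B u ` BW) \<subseteq> V.span (prod ` (BU \<times> BW))"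
        by (intro V.span_mono) blast
      moreover have "c u \<in> V.span BW"
        using c(1) BW(3) by blast
      ultimately show ?thesis
        using tensor_prod_in_span_image[OF BW(5)] by blast
    qed
    then show "P \<in> V.span (prod ` (BU \<times> BW))"
      unfolding c(2) by (intro V.span_sum)
  qed
  ultimately have "card (prod ` (BU \<times> BW)) = V.dim (slicewise \<kappa> A B U W)"
    using indep(2) by (rule V.basis_card_eq_dim)
  moreover have "card (prod ` (BU \<times> BW)) = card BU * card BW"
    using card_image[OF indep(1)] by (simp add: card_cartesian_product)
  ultimately show ?thesis
    using BU(4) BW(4) by simp
qed

definition const_idx :: "'a set \<Rightarrow> nat \<Rightarrow> 'a \<Rightarrow> nat" where
  "const_idx S s = restrict (\<lambda>_. s) S"

lemma const_idx_in_indices: "s < \<kappa> \<Longrightarrow> const_idx S s \<in> indices \<kappa> S"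
  unfolding const_idx_def indices_def by auto

lemma restrict_const_idx: "Y \<subseteq> S \<Longrightarrow> restrict (const_idx S s) Y = const_idx Y s"
  unfolding const_idx_def by (auto simp: fun_eq_iff)

lemma swap_idx_const_idx: "a \<in> Y \<Longrightarrow> b \<in> Y \<Longrightarrow> swap_idx a b (const_idx Y s) = const_idx Y s"
  unfolding const_idx_def swap_idx_def by (auto simp: fun_eq_iff)

lemma delta_const_idx_in_Lspace:
  assumes "s < \<kappa>"
  shows "delta (const_idx (taxa t) s) \<in> Lspace \<kappa> t"
proof (rule LspaceI)
  show "is_tensor \<kappa> (taxa t) (delta (const_idx (taxa t) s))"
    by (rule delta_is_tensor[OF const_idx_in_indices[OF assms]])
next
  fix Y t' a b f
  assume Y: "Y \<subseteq> taxa t" and "restrict_tree t Y = Some t'" "two_clade t' a b"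
  then have ab: "a \<in> Y" "b \<in> Y"
    using two_clade_taxa[of t' a b] taxa_restrict_tree[of t Y t'] by auto
  have "const_idx Y s = swap_idx a b f \<longleftrightarrow> swap_idx a b (const_idx Y s) = f"
    by auto
  then have "const_idx Y s = swap_idx a b f \<longleftrightarrow> const_idx Y s = f"
    by (simp only: swap_idx_const_idx[OF ab])
  then show "marg \<kappa> (taxa t) Y (delta (const_idx (taxa t) s)) (swap_idx a b f) =
      marg \<kappa> (taxa t) Y (delta (const_idx (taxa t) s)) f"
    by (simp add: marg_delta[OF finite_taxa Y const_idx_in_indices[OF assms]] restrict_const_idx[OF Y]
        swap_idx_in_indices_iff[OF ab])
qed

definition antisym_tensor :: "nat \<Rightarrow> 'a set \<Rightarrow> 'a set \<Rightarrow> nat \<times> nat \<Rightarrow> ('a \<Rightarrow> nat) \<Rightarrow> real" where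
  "antisym_tensor \<kappa> A B st =
     tensor_prod \<kappa> A B (delta (const_idx A (fst st))) (delta (const_idx B (snd st))) -
     tensor_prod \<kappa> A B (delta (const_idx A (snd st))) (delta (const_idx B (fst st)))"

lemma antisym_tensor_in_slicewise:
  assumes "wf_tree (Node tA tB)" "s < \<kappa>" "t < \<kappa>"
  shows "antisym_tensor \<kappa> (taxa tA) (taxa tB) (s, t) \<in> slicewise \<kappa> (taxa tA) (taxa tB) (Lspace \<kappa> tA) (Lspace \<kappa> tB)"
proof -
  have "taxa tA \<inter> taxa tB = {}"
    using assms(1) by (simp add: wf_tree_Node)
  note prod = tensor_prod_in_slicewise[OF this subspace_Lspace subspace_Lspace]
  show ?thesis
    unfolding antisym_tensor_def fst_conv snd_conv
    using Lspace_is_tensor delta_const_idx_in_Lspace assms(2,3)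
    by (intro V.subspace_diff[OF subspace_slicewise[OF subspace_Lspace subspace_Lspace]] prod) auto
qed

lemma pair_marg_diff: "pair_marg \<kappa> X (P - Q) a b s t = pair_marg \<kappa> X P a b s t - pair_marg \<kappa> X Q a b s t"
  unfolding pair_marg_def sum_subtractf[symmetric] by (intro sum.cong refl) simp

lemma pair_marg_sum:
  "pair_marg \<kappa> X (\<Sum>x\<in>S. fscale (c x) (F x)) a b s t = (\<Sum>x\<in>S. c x * pair_marg \<kappa> X (F x) a b s t)"
  unfolding pair_marg_def sum_fun_apply sum_distrib_left
  by (subst sum.swap) (intro sum.cong refl, auto)

lemma pair_marg_delta:
  assumes "finite X" "p \<in> indices \<kappa> X"
  shows "pair_marg \<kappa> X (delta p) a b s t = (if p a = s \<and> p b = t then 1 else 0)"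
proof -
  have "pair_marg \<kappa> X (delta p) a b s t = (\<Sum>F\<in>indices \<kappa> X. if F = p then (if F a = s \<and> F b = t then 1 else 0) else 0)"
    unfolding pair_marg_def by (intro sum.cong refl) (auto simp: delta_def)
  with assms show ?thesis
    by (simp add: finite_indices)
qed

lemma pair_marg_antisym_tensor:
  assumes disj: "A \<inter> B = {}" and fin: "finite A" "finite B" and a0: "a0 \<in> A" and b0: "b0 \<in> B"
    and st: "s < \<kappa>" "t < \<kappa>"
  shows "pair_marg \<kappa> (A \<union> B) (antisym_tensor \<kappa> A B (s, t)) a0 b0 i j =
    (if (s, t) = (i, j) then 1 else 0) - (if (s, t) = (j, i) then 1 else 0)"
proof -
  have "pair_marg \<kappa> (A \<union> B) (tensor_prod \<kappa> A B (delta (const_idx A x)) (delta (const_idx B y))) a0 b0 i j =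
      (if x = i \<and> y = j then 1 else 0)" if "x < \<kappa>" "y < \<kappa>" for x y
  proof -
    have "glue A (const_idx A x) (const_idx B y) \<in> indices \<kappa> (A \<union> B)"
      using glue_in_indices[OF disj const_idx_in_indices[OF that(1)] const_idx_in_indices[OF that(2)]] .
    moreover have "glue A (const_idx A x) (const_idx B y) a0 = x" "glue A (const_idx A x) (const_idx B y) b0 = y"
      using a0 b0 disj by (auto simp: glue_def const_idx_def)
    ultimately show ?thesis
      using fin tensor_prod_delta[OF disj const_idx_in_indices[OF that(1)] const_idx_in_indices[OF that(2)]]
      by (simp add: pair_marg_delta)
  qed
  then show ?thesis
    using st by (simp add: antisym_tensor_def pair_marg_diff)
qed

definition increasing_pairs :: "nat \<Rightarrow> (nat \<times> nat) set" where
  "increasing_pairs \<kappa> = {(s, t). s < t \<and> t < \<kappa>}"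

lemma finite_increasing_pairs: "finite (increasing_pairs \<kappa>)"
  by (rule finite_subset[of _ "{..<\<kappa>} \<times> {..<\<kappa>}"]) (auto simp: increasing_pairs_def)

lemma card_increasing_pairs: "card (increasing_pairs \<kappa>) = \<kappa> choose 2"
proof (induct \<kappa>)
  case (Suc k)
  have "increasing_pairs (Suc k) = increasing_pairs k \<union> (\<lambda>s. (s, k)) ` {..<k}"
    "increasing_pairs k \<inter> (\<lambda>s. (s, k)) ` {..<k} = {}"
    by (auto simp: increasing_pairs_def)
  then have "card (increasing_pairs (Suc k)) = card (increasing_pairs k) + k"
    using finite_increasing_pairs by (simp add: card_Un_disjoint card_image inj_on_def)
  with Suc show ?case
    by (simp add: numeral_2_eq_2)
qed (simp add: increasing_pairs_def)

lemma pair_marg_sum_antisym_tensor: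
  assumes disj: "A \<inter> B = {}" and fin: "finite A" "finite B" and a0: "a0 \<in> A" and b0: "b0 \<in> B"
  shows "pair_marg \<kappa> (A \<union> B) (\<Sum>x\<in>increasing_pairs \<kappa>. fscale (c x) (antisym_tensor \<kappa> A B x)) a0 b0 i j =
    (if (i, j) \<in> increasing_pairs \<kappa> then c (i, j) else 0) - (if (j, i) \<in> increasing_pairs \<kappa> then c (j, i) else 0)"
proof -
  have "pair_marg \<kappa> (A \<union> B) (\<Sum>x\<in>increasing_pairs \<kappa>. fscale (c x) (antisym_tensor \<kappa> A B x)) a0 b0 i j
      = (\<Sum>x\<in>increasing_pairs \<kappa>. (if x = (i, j) then c x else 0) - (if x = (j, i) then c x else 0))"
    unfolding pair_marg_sum
  proof (intro sum.cong refl)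
    fix x assume "x \<in> increasing_pairs \<kappa>"
    then obtain s t where x: "x = (s, t)" "s < \<kappa>" "t < \<kappa>"
      by (auto simp: increasing_pairs_def)
    show "c x * pair_marg \<kappa> (A \<union> B) (antisym_tensor \<kappa> A B x) a0 b0 i j =
        (if x = (i, j) then c x else 0) - (if x = (j, i) then c x else 0)"
      unfolding x(1) pair_marg_antisym_tensor[OF disj fin a0 b0 x(2,3)]
      by (cases "(s, t) = (i, j)"; cases "(s, t) = (j, i)") (simp_all only: simp_thms if_True if_False mult_1_right mult_0_right diff_zero diff_self right_diff_distrib)
  qed
  also have "\<dots> = (if (i, j) \<in> increasing_pairs \<kappa> then c (i, j) else 0) - (if (j, i) \<in> increasing_pairs \<kappa> then c (j, i) else 0)"
    by (simp add: sum_subtractf finite_increasing_pairs)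
  finally show ?thesis .
qed

lemma independent_antisym_tensor:
  assumes disj: "A \<inter> B = {}" and fin: "finite A" "finite B" and a0: "a0 \<in> A" and b0: "b0 \<in> B"
  shows "inj_on (antisym_tensor \<kappa> A B) (increasing_pairs \<kappa>)"
    and "V.independent (antisym_tensor \<kappa> A B ` increasing_pairs \<kappa>)"
proof -
  have "\<forall>x\<in>increasing_pairs \<kappa>. c x = 0"
    if zero: "(\<Sum>x\<in>increasing_pairs \<kappa>. fscale (c x) (antisym_tensor \<kappa> A B x)) = 0" for c
  proof
    fix x assume x: "x \<in> increasing_pairs \<kappa>"
    obtain i j where ij: "x = (i, j)"
      by (cases x)
    have "c x = pair_marg \<kappa> (A \<union> B) (\<Sum>x\<in>increasing_pairs \<kappa>. fscale (c x) (antisym_tensor \<kappa> A B x)) a0 b0 i j"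
      unfolding pair_marg_sum_antisym_tensor[OF disj fin a0 b0] using x ij by (simp add: increasing_pairs_def)
    also have "\<dots> = 0"
      unfolding zero by (simp add: pair_marg_def cong: if_cong)
    finally show "c x = 0" .
  qed
  then show "inj_on (antisym_tensor \<kappa> A B) (increasing_pairs \<kappa>)"
    and "V.independent (antisym_tensor \<kappa> A B ` increasing_pairs \<kappa>)"
    using independent_family[OF finite_increasing_pairs] by blast+
qed

lemma span_antisym_tensor_symmetric_pair_marg:
  assumes disj: "A \<inter> B = {}" and fin: "finite A" "finite B" and a0: "a0 \<in> A" and b0: "b0 \<in> B"
    and P: "P \<in> V.span (antisym_tensor \<kappa> A B ` increasing_pairs \<kappa>)"
    and sym: "symmetric_pair_marg \<kappa> (A \<union> B) P a0 b0"
  shows "P = 0"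
proof -
  let ?I = "increasing_pairs \<kappa>"
  have "finite (antisym_tensor \<kappa> A B ` ?I)"
    by (simp add: finite_increasing_pairs)
  with P obtain r where "P = (\<Sum>v\<in>antisym_tensor \<kappa> A B ` ?I. fscale (r v) v)"
    using V.span_finite by auto
  then have P_eq: "P = (\<Sum>x\<in>?I. fscale (r (antisym_tensor \<kappa> A B x)) (antisym_tensor \<kappa> A B x))"
    by (simp add: sum.reindex[OF independent_antisym_tensor(1)[OF disj fin a0 b0]])
  have "r (antisym_tensor \<kappa> A B x) = 0" if x: "x \<in> ?I" for x
  proof -
    obtain i j where ij: "x = (i, j)" "i < j" "j < \<kappa>"
      using x by (cases x) (auto simp: increasing_pairs_def)
    have "pair_marg \<kappa> (A \<union> B) P a0 b0 i j = pair_marg \<kappa> (A \<union> B) P a0 b0 j i"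
      using sym ij by (simp add: symmetric_pair_marg_def)
    then show ?thesis
      unfolding P_eq pair_marg_sum_antisym_tensor[OF disj fin a0 b0] using ij
      by (simp add: increasing_pairs_def)
  qed
  then show ?thesis
    unfolding P_eq by (simp add: sum.neutral)
qed

lemma symmetrize_pair_marg:
  assumes disj: "A \<inter> B = {}" and fin: "finite A" "finite B" and a0: "a0 \<in> A" and b0: "b0 \<in> B"
  obtains Q where "Q \<in> V.span (antisym_tensor \<kappa> A B ` increasing_pairs \<kappa>)"
    and "symmetric_pair_marg \<kappa> (A \<union> B) (P - Q) a0 b0"
proof
  let ?pm = "pair_marg \<kappa> (A \<union> B) P a0 b0"
  define Q where "Q = (\<Sum>x\<in>increasing_pairs \<kappa>.
    fscale ((?pm (fst x) (snd x) - ?pm (snd x) (fst x)) / 2) (antisym_tensor \<kappa> A B x))"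
  show "Q \<in> V.span (antisym_tensor \<kappa> A B ` increasing_pairs \<kappa>)"
    unfolding Q_def by (intro V.span_sum V.span_scale V.span_base imageI)
  have "pair_marg \<kappa> (A \<union> B) (P - Q) a0 b0 i j = pair_marg \<kappa> (A \<union> B) (P - Q) a0 b0 j i"
    if "i < \<kappa>" "j < \<kappa>" for i j
    unfolding pair_marg_diff Q_def pair_marg_sum_antisym_tensor[OF disj fin a0 b0]
    using that by (cases i j rule: linorder_cases) (auto simp: increasing_pairs_def field_simps)
  then show "symmetric_pair_marg \<kappa> (A \<union> B) (P - Q) a0 b0"
    by (simp add: symmetric_pair_marg_def)
qed

lemma dim_eq_dim_symmetric_pair_marg_add:
  assumes disj: "A \<inter> B = {}" and fin: "finite A" "finite B" and a0: "a0 \<in> A" and b0: "b0 \<in> B"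
    and M: "V.subspace M" "M \<subseteq> {P. is_tensor \<kappa> (A \<union> B) P}"
    and L: "V.subspace L" "L = {P \<in> M. symmetric_pair_marg \<kappa> (A \<union> B) P a0 b0}"
    and antisym: "\<And>x. x \<in> increasing_pairs \<kappa> \<Longrightarrow> antisym_tensor \<kappa> A B x \<in> M"
  shows "V.dim M = V.dim L + (\<kappa> choose 2)"
proof -
  let ?E = "antisym_tensor \<kappa> A B ` increasing_pairs \<kappa>"
  note indep = independent_antisym_tensor[OF disj fin a0 b0]
  have "?E \<subseteq> M"
    using antisym by blast
  then have span_E: "V.span ?E \<subseteq> M"
    using V.span_minimal[OF _ M(1)] by blast
  have "V.dim M = V.dim L + card ?E"
  proof (rule dim_direct_sum[OF L(1) _ _ _ \<open>?E \<subseteq> M\<close> indep(2)])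
    show "V.span ?E \<inter> L \<subseteq> {0}"
      using span_antisym_tensor_symmetric_pair_marg[OF disj fin a0 b0] L(2) by blast
    show "M \<subseteq> V.span (L \<union> ?E)"
    proof
      fix P assume P: "P \<in> M"
      obtain Q where Q: "Q \<in> V.span ?E" "symmetric_pair_marg \<kappa> (A \<union> B) (P - Q) a0 b0"
        using symmetrize_pair_marg[OF disj fin a0 b0] by blast
      have "P - Q \<in> L"
        using L(2) Q V.subspace_diff[OF M(1) P] span_E by blast
      then have "(P - Q) + Q \<in> V.span (L \<union> ?E)"
        using Q(1) V.span_mono[of ?E "L \<union> ?E"] V.span_base[of "P - Q"] V.span_add by blast
      then show "P \<in> V.span (L \<union> ?E)"
        by simp
    qed
    show "L \<subseteq> V.span (delta ` indices \<kappa> (A \<union> B))"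
      using L(2) M(2) tensor_in_span_delta fin by blast
    show "finite (delta ` indices \<kappa> (A \<union> B))" "finite ?E"
      using fin by (simp_all add: finite_indices finite_increasing_pairs)
    show "L \<subseteq> M"
      using L(2) by blast
  qed
  then show ?thesis
    by (simp add: card_image[OF indep(1)] card_increasing_pairs)
qed

lemma dim_slicewise_Lspace:
  fixes \<kappa> :: nat
  assumes wf: "wf_tree (Node tA tB)"
  defines "M \<equiv> slicewise \<kappa> (taxa tA) (taxa tB) (Lspace \<kappa> tA) (Lspace \<kappa> tB)"
  shows "V.dim M = V.dim (Lspace \<kappa> tA) * V.dim (Lspace \<kappa> tB)"
    and "V.dim M = V.dim (Lspace \<kappa> (Node tA tB)) + (\<kappa> choose 2)"
proof -
  have disj: "taxa tA \<inter> taxa tB = {}"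
    using wf by (simp add: wf_tree_Node)
  obtain a0 b0 where a0: "a0 \<in> taxa tA" and b0: "b0 \<in> taxa tB"
    using taxa_nonempty by (metis ex_in_conv)
  have tensors: "Lspace \<kappa> t \<subseteq> {P. is_tensor \<kappa> (taxa t) P}" for t
    using Lspace_is_tensor by blast
  show "V.dim M = V.dim (Lspace \<kappa> tA) * V.dim (Lspace \<kappa> tB)"
    unfolding M_def
    using dim_slicewise[OF disj finite_taxa finite_taxa subspace_Lspace tensors subspace_Lspace tensors] .
  show "V.dim M = V.dim (Lspace \<kappa> (Node tA tB)) + (\<kappa> choose 2)"
  proof (rule dim_eq_dim_symmetric_pair_marg_add[OF disj finite_taxa finite_taxa a0 b0 _ _ subspace_Lspace])
    show "V.subspace M"
      unfolding M_def by (rule subspace_slicewise[OF subspace_Lspace subspace_Lspace])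
    show "M \<subseteq> {P. is_tensor \<kappa> (taxa tA \<union> taxa tB) P}"
      by (auto simp: M_def slicewise_def)
    show "Lspace \<kappa> (Node tA tB) = {P \<in> M. symmetric_pair_marg \<kappa> (taxa tA \<union> taxa tB) P a0 b0}"
      unfolding M_def by (rule Lspace_Node_eq[OF wf a0 b0])
    show "antisym_tensor \<kappa> (taxa tA) (taxa tB) x \<in> M" if "x \<in> increasing_pairs \<kappa>" for x
      using that antisym_tensor_in_slicewise[OF wf] by (cases x) (auto simp: M_def increasing_pairs_def)
  qed
qed

theorem theorem4p1:
  fixes \<kappa> :: nat and tA tB :: "'a rtree"
  assumes "\<kappa> \<ge> 2"
    and "wf_tree (Node tA tB)"
  shows "int (c_dim \<kappa> (Node tA tB)) = int (c_dim \<kappa> tA) * int (c_dim \<kappa> tB) - int (\<kappa> choose 2)"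
proof -
  have "c_dim \<kappa> (Node tA tB) + (\<kappa> choose 2) = c_dim \<kappa> tA * c_dim \<kappa> tB"
    using dim_slicewise_Lspace[OF assms(2)] unfolding c_dim_eq_dim by simp
  then have "int (c_dim \<kappa> (Node tA tB)) + int (\<kappa> choose 2) = int (c_dim \<kappa> tA) * int (c_dim \<kappa> tB)"
    by (metis of_nat_add of_nat_mult)
  then show ?thesis
    by linarith
qed

end
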